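(* \[m_{\mathbb{H}}(x^2-y^2)=0.\]
   Context: $\mathbb{H}$ denotes the quaternions, $\mathbb{T}^2(\mathbb{H})=\{(x,y)\in\mathbb{H}^2:|x|=|y|=1\}$ with probability Haar measure $\mu$, and $m_{\mathbb{H}}(P)=\int_{\mathbb{T}^2(\mathbb{H})}\log|P(x,y)|\,d\mu$. *)

theory Defs
  imports "HOL-Analysis.Analysis" "HOL-Probability.Probability"
begin

text \<open>Quaternions a + b i + c j + d k are represented as the real 4-tuple (a,b,c,d);
  the product-type norm is the Euclidean norm, i.e. the quaternion absolute value.\<close>

type_synonym quat = "real \<times> real \<times> real \<times> real"

fun qmult :: "quat \<Rightarrow> quat \<Rightarrow> quat" where
  "qmult (a1, b1, c1, d1) (a2, b2, c2, d2) =
     (a1*a2 - b1*b2 - c1*c2 - d1*d2,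
      a1*b2 + b1*a2 + c1*d2 - d1*c2,
      a1*c2 - b1*d2 + c1*a2 + d1*b2,
      a1*d2 + b1*c2 - c1*b2 + d1*a2)"

definition qtorus2 :: "(quat \<times> quat) set" where
  "qtorus2 = {(x, y). norm x = 1 \<and> norm y = 1}"

definition is_haar_qtorus2 :: "(quat \<times> quat) measure \<Rightarrow> bool" where
  "is_haar_qtorus2 \<mu> \<longleftrightarrow>
     prob_space \<mu> \<and> space \<mu> = qtorus2 \<and>
     sets \<mu> = sets (restrict_space borel qtorus2) \<and>
     (\<forall>a b. (a, b) \<in> qtorus2 \<longrightarrow>
        distr \<mu> \<mu> (\<lambda>(x, y). (qmult a x, qmult b y)) = \<mu>)"

definition mahler_H :: "(quat \<times> quat) measure \<Rightarrow> (quat \<Rightarrow> quat \<Rightarrow> quat) \<Rightarrow> real" where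
  "mahler_H \<mu> P = (\<integral>z. ln (norm (P (fst z) (snd z))) \<partial>\<mu>)"

end

theory Submission
  imports Defs
begin

text \<open>Under the Haar measure the coordinates \<open>x, y\<close> are independent and uniformly distributed
  on \<open>S\<^sup>3\<close>. Substituting \<open>y = x z\<close> gives \<open>|x\<^sup>2 - y\<^sup>2| = |1 - z| |1 + z| \<surd>P(x, z)\<close>, where
  \<open>P(x, z)\<close> is the squared length of the projection of \<open>x\<close> onto the plane spanned by \<open>1\<close> and
  \<open>Im z\<close>. Conjugating \<open>Im z\<close> to a multiple of \<open>i\<close> turns \<open>P\<close> into \<open>1 - (x\<^sub>2\<^sup>2 + x\<^sub>3\<^sup>2)\<close>, and
  \<open>x\<^sub>2\<^sup>2 + x\<^sub>3\<^sup>2\<close> is uniformly distributed on \<open>[0, 1]\<close> since its moments are \<open>1 / (n + 1)\<close>;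
  hence \<open>E[- ln P] = 1\<close>. Averaging over the circles \<open>t \<mapsto> e\<^sup>i\<^sup>t z\<close> with Jensen's formula gives
  \<open>E[ln 2 - ln |1 \<plusminus> z|] = ln 2 - 1/4\<close>. Altogether
  \<open>E[ln 4 - ln |x\<^sup>2 - y\<^sup>2|] = 2 (ln 2 - 1/4) + 1/2 = ln 4\<close>.\<close>

section \<open>Quaternion arithmetic\<close>

definition q0 :: "quat \<Rightarrow> real" where "q0 x = fst x"
definition q1 :: "quat \<Rightarrow> real" where "q1 x = fst (snd x)"
definition q2 :: "quat \<Rightarrow> real" where "q2 x = fst (snd (snd x))"
definition q3 :: "quat \<Rightarrow> real" where "q3 x = snd (snd (snd x))"

lemma q_tuple [simp]: "q0 (a, b, c, d) = a" "q1 (a, b, c, d) = b" "q2 (a, b, c, d) = c" "q3 (a, b, c, d) = d"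
  by (simp_all add: q0_def q1_def q2_def q3_def)

lemma quat_eqI: "q0 x = q0 y \<Longrightarrow> q1 x = q1 y \<Longrightarrow> q2 x = q2 y \<Longrightarrow> q3 x = q3 y \<Longrightarrow> x = y"
  by (cases x rule: prod_cases4; cases y rule: prod_cases4) simp

lemma q_qmult [simp]:
  "q0 (qmult x y) = q0 x * q0 y - q1 x * q1 y - q2 x * q2 y - q3 x * q3 y"
  "q1 (qmult x y) = q0 x * q1 y + q1 x * q0 y + q2 x * q3 y - q3 x * q2 y"
  "q2 (qmult x y) = q0 x * q2 y - q1 x * q3 y + q2 x * q0 y + q3 x * q1 y"
  "q3 (qmult x y) = q0 x * q3 y + q1 x * q2 y - q2 x * q1 y + q3 x * q0 y"
  by (cases x rule: prod_cases4; cases y rule: prod_cases4; simp)+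

lemma q_add [simp]: "q0 (x + y) = q0 x + q0 y" "q1 (x + y) = q1 x + q1 y"
    "q2 (x + y) = q2 x + q2 y" "q3 (x + y) = q3 x + q3 y"
  and q_diff [simp]: "q0 (x - y) = q0 x - q0 y" "q1 (x - y) = q1 x - q1 y"
    "q2 (x - y) = q2 x - q2 y" "q3 (x - y) = q3 x - q3 y"
  and q_uminus [simp]: "q0 (- x) = - q0 x" "q1 (- x) = - q1 x" "q2 (- x) = - q2 x" "q3 (- x) = - q3 x"
  and q_scaleR [simp]: "q0 (r *\<^sub>R x) = r * q0 x" "q1 (r *\<^sub>R x) = r * q1 x"
    "q2 (r *\<^sub>R x) = r * q2 x" "q3 (r *\<^sub>R x) = r * q3 x"
  by (simp_all add: q0_def q1_def q2_def q3_def)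

lemma inner_quat: "inner x y = q0 x * q0 y + q1 x * q1 y + q2 x * q2 y + q3 x * q3 y"
  by (cases x rule: prod_cases4; cases y rule: prod_cases4) (simp add: inner_Pair)

lemma norm_quat_sq: "(norm x)\<^sup>2 = (q0 x)\<^sup>2 + (q1 x)\<^sup>2 + (q2 x)\<^sup>2 + (q3 x)\<^sup>2"
  unfolding power2_norm_eq_inner by (simp add: inner_quat power2_eq_square)

definition qone :: quat where "qone = (1, 0, 0, 0)"
definition qi :: quat where "qi = (0, 1, 0, 0)"
definition qj :: quat where "qj = (0, 0, 1, 0)"
definition qk :: quat where "qk = (0, 0, 0, 1)"
definition qcnj :: "quat \<Rightarrow> quat" where "qcnj x = (q0 x, - q1 x, - q2 x, - q3 x)"

lemma q_basis [simp]:
  "q0 qone = 1" "q1 qone = 0" "q2 qone = 0" "q3 qone = 0"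
  "q0 qi = 0" "q1 qi = 1" "q2 qi = 0" "q3 qi = 0"
  "q0 qj = 0" "q1 qj = 0" "q2 qj = 1" "q3 qj = 0"
  "q0 qk = 0" "q1 qk = 0" "q2 qk = 0" "q3 qk = 1"
  by (simp_all add: qone_def qi_def qj_def qk_def)

lemma q_qcnj [simp]: "q0 (qcnj x) = q0 x" "q1 (qcnj x) = - q1 x" "q2 (qcnj x) = - q2 x" "q3 (qcnj x) = - q3 x"
  by (simp_all add: qcnj_def)

lemma inner_basis [simp]: "inner x qone = q0 x" "inner x qi = q1 x" "inner x qj = q2 x" "inner x qk = q3 x"
  by (simp_all add: inner_quat)

lemma norm_basis [simp]: "norm qone = 1" "norm qi = 1" "norm qj = 1" "norm qk = 1"
  by (simp_all add: norm_Pair qone_def qi_def qj_def qk_def)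

lemma qmult_assoc: "qmult (qmult x y) z = qmult x (qmult y z)"
  by (rule quat_eqI) (simp_all add: algebra_simps)

lemma qmult_qone [simp]: "qmult qone x = x" "qmult x qone = x"
  by (rule quat_eqI; simp)+

lemma qmult_scaleR [simp]: "qmult (r *\<^sub>R x) y = r *\<^sub>R qmult x y" "qmult x (r *\<^sub>R y) = r *\<^sub>R qmult x y"
  by (rule quat_eqI; simp add: algebra_simps)+

lemma qmult_diff_right: "qmult x (y - z) = qmult x y - qmult x z"
  by (rule quat_eqI) (simp_all add: algebra_simps)

lemma qmult_minus_qone: "qmult (- qone) x = - x"
  by (rule quat_eqI) simp_all

lemma qcnj_qmult: "qcnj (qmult x y) = qmult (qcnj y) (qcnj x)"
  by (rule quat_eqI) (simp_all add: algebra_simps)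

lemma qcnj_qcnj [simp]: "qcnj (qcnj x) = x"
  by (rule quat_eqI) simp_all

lemma qcnj_scaleR: "qcnj (r *\<^sub>R x) = r *\<^sub>R qcnj x"
  by (rule quat_eqI) simp_all

lemma norm_qcnj [simp]: "norm (qcnj x) = norm x"
  by (simp add: norm_eq_sqrt_inner inner_quat)

lemma qmult_qcnj: "qmult x (qcnj x) = (norm x)\<^sup>2 *\<^sub>R qone" "qmult (qcnj x) x = (norm x)\<^sup>2 *\<^sub>R qone"
  unfolding norm_quat_sq by (rule quat_eqI; simp add: algebra_simps power2_eq_square)+

lemma inner_qmult_left: "inner (qmult a x) (qmult a y) = (norm a)\<^sup>2 * inner x y"
  and inner_qmult_right: "inner (qmult x a) (qmult y a) = (norm a)\<^sup>2 * inner x y"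
  unfolding inner_quat norm_quat_sq by (simp_all add: algebra_simps power2_eq_square)

lemma norm_qmult: "norm (qmult x y) = norm x * norm y"
proof -
  have "(norm (qmult x y))\<^sup>2 = (norm x * norm y)\<^sup>2"
    unfolding power_mult_distrib norm_quat_sq by (simp add: algebra_simps power2_eq_square)
  then show ?thesis
    by (simp add: power2_eq_iff_nonneg)
qed

definition S3 :: "quat set" where "S3 = {x. norm x = 1}"

lemma S3_iff [simp]: "x \<in> S3 \<longleftrightarrow> norm x = 1"
  by (simp add: S3_def)

lemma qtorus2_eq: "qtorus2 = S3 \<times> S3"
  by (auto simp: qtorus2_def)

lemma qmult_qcnj_S3: "x \<in> S3 \<Longrightarrow> qmult x (qcnj x) = qone" "x \<in> S3 \<Longrightarrow> qmult (qcnj x) x = qone"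
  by (simp_all add: qmult_qcnj)

section \<open>Haar measure on the unit quaternions\<close>

lemma continuous_on_q [continuous_intros]:
  "continuous_on S f \<Longrightarrow> continuous_on S (\<lambda>x. q0 (f x))"
  "continuous_on S f \<Longrightarrow> continuous_on S (\<lambda>x. q1 (f x))"
  "continuous_on S f \<Longrightarrow> continuous_on S (\<lambda>x. q2 (f x))"
  "continuous_on S f \<Longrightarrow> continuous_on S (\<lambda>x. q3 (f x))"
  unfolding q0_def q1_def q2_def q3_def by (auto intro!: continuous_intros)

lemma qmult_eq_tuple: "qmult x y =
    (q0 (qmult x y), q1 (qmult x y), q2 (qmult x y), q3 (qmult x y))"
  by (rule quat_eqI) simp_all

lemma borel_measurable_q [measurable]:
  "q0 \<in> borel_measurable borel" "q1 \<in> borel_measurable borel"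
  "q2 \<in> borel_measurable borel" "q3 \<in> borel_measurable borel"
  by (intro borel_measurable_continuous_onI continuous_intros continuous_on_id)+

lemma borel_measurable_q_comp [measurable (raw)]:
  "f \<in> borel_measurable M \<Longrightarrow> (\<lambda>x. q0 (f x)) \<in> borel_measurable M"
  "f \<in> borel_measurable M \<Longrightarrow> (\<lambda>x. q1 (f x)) \<in> borel_measurable M"
  "f \<in> borel_measurable M \<Longrightarrow> (\<lambda>x. q2 (f x)) \<in> borel_measurable M"
  "f \<in> borel_measurable M \<Longrightarrow> (\<lambda>x. q3 (f x)) \<in> borel_measurable M"
  using measurable_compose borel_measurable_q by blast+

lemma borel_measurable_qmult [measurable (raw)]:
  assumes [measurable]: "f \<in> borel_measurable M" "g \<in> borel_measurable M"
  shows "(\<lambda>x. qmult (f x) (g x)) \<in> borel_measurable M"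
  by (subst qmult_eq_tuple, unfold q_qmult) (intro borel_measurable_Pair; measurable)

lemma borel_measurable_qcnj [measurable (raw)]:
  assumes [measurable]: "f \<in> borel_measurable M"
  shows "(\<lambda>x. qcnj (f x)) \<in> borel_measurable M"
  unfolding qcnj_def by (intro borel_measurable_Pair; measurable)

lemma borel_measurable_fst_snd [measurable]:
  "fst \<in> borel_measurable (borel :: ('a::topological_space \<times> 'b::topological_space) measure)"
  "snd \<in> borel_measurable (borel :: ('a::topological_space \<times> 'b::topological_space) measure)"
  by (intro borel_measurable_continuous_onI continuous_intros)+

lemma S3_sets [measurable]: "S3 \<in> sets borel"
  unfolding S3_def by (intro borel_closed closed_Collect_eq continuous_intros)

lemma nn_integral_swap:
  assumes "sigma_finite_measure M" "sigma_finite_measure N"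
    and "(\<lambda>z. f (fst z) (snd z)) \<in> borel_measurable (M \<Otimes>\<^sub>M N)"
  shows "(\<integral>\<^sup>+ x. (\<integral>\<^sup>+ y. f x y \<partial>N) \<partial>M) = (\<integral>\<^sup>+ y. (\<integral>\<^sup>+ x. f x y \<partial>M) \<partial>N)"
proof -
  interpret pair_sigma_finite M N
    using assms(1,2) by (simp add: pair_sigma_finite_def)
  show ?thesis
    using Fubini'[of f] assms(3) by (simp add: case_prod_beta')
qed

locale haar_S3 = prob_space \<nu> for \<nu> :: "quat measure" +
  assumes space_eq: "space \<nu> = S3"
    and sets_eq: "sets \<nu> = sets (restrict_space borel S3)"
    and left_invariant: "\<And>a. a \<in> S3 \<Longrightarrow> distr \<nu> \<nu> (qmult a) = \<nu>"
begin

lemma measurable_ident_borel [measurable]: "(\<lambda>x. x) \<in> measurable \<nu> borel"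
  unfolding measurable_cong_sets[OF sets_eq refl] by (rule measurable_restrict_space1) simp

lemma norm_in_space: "x \<in> space \<nu> \<Longrightarrow> norm x = 1"
  by (simp add: space_eq)

lemma sigma_finite: "sigma_finite_measure \<nu>"
  by (rule prob_space_imp_sigma_finite) (rule prob_space_axioms)

lemma measurable_qmult_left: "a \<in> S3 \<Longrightarrow> qmult a \<in> measurable \<nu> \<nu>"
  unfolding measurable_cong_sets[OF sets_eq sets_eq]
  by (rule measurable_restrict_space3) (auto simp: norm_qmult)

lemma nn_integral_qmult_left:
  assumes a: "a \<in> S3" and f [measurable]: "f \<in> borel_measurable borel"
  shows "(\<integral>\<^sup>+ x. f (qmult a x) \<partial>\<nu>) = (\<integral>\<^sup>+ x. f x \<partial>\<nu>)"
  by (subst (2) left_invariant[OF a, symmetric])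
     (simp add: nn_integral_distr[OF measurable_qmult_left[OF a]])

lemma integral_qmult_left:
  fixes f :: "quat \<Rightarrow> real"
  assumes a: "a \<in> S3" and f [measurable]: "f \<in> borel_measurable borel"
  shows "(\<integral> x. f (qmult a x) \<partial>\<nu>) = (\<integral> x. f x \<partial>\<nu>)"
  by (subst (2) left_invariant[OF a, symmetric])
     (simp add: integral_distr[OF measurable_qmult_left[OF a]])

text \<open>Averaging the left invariance over a second copy of \<open>\<nu>\<close> and exchanging the integrals
  yields invariance under inversion; right invariance then follows from
  \<open>x b = qcnj (qcnj b \<cdot> qcnj x)\<close>.\<close>

lemma nn_integral_qcnj:
  assumes f [measurable]: "f \<in> borel_measurable borel"
  shows "(\<integral>\<^sup>+ x. f (qcnj x) \<partial>\<nu>) = (\<integral>\<^sup>+ x. f x \<partial>\<nu>)"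
proof -
  have "(\<integral>\<^sup>+ x. f x \<partial>\<nu>) = (\<integral>\<^sup>+ a. (\<integral>\<^sup>+ x. f (qmult (qcnj a) x) \<partial>\<nu>) \<partial>\<nu>)"
    by (simp add: nn_integral_qmult_left norm_in_space emeasure_space_1 cong: nn_integral_cong)
  also have "\<dots> = (\<integral>\<^sup>+ x. (\<integral>\<^sup>+ a. f (qmult (qcnj a) x) \<partial>\<nu>) \<partial>\<nu>)"
    by (rule nn_integral_swap[OF sigma_finite sigma_finite]) measurable
  also have "\<dots> = (\<integral>\<^sup>+ x. (\<integral>\<^sup>+ a. f (qcnj (qmult (qcnj x) a)) \<partial>\<nu>) \<partial>\<nu>)"
    by (simp add: qcnj_qmult)
  also have "\<dots> = (\<integral>\<^sup>+ x. f (qcnj x) \<partial>\<nu>)"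
    by (simp add: nn_integral_qmult_left[where f = "\<lambda>a. f (qcnj a)"] norm_in_space emeasure_space_1
        cong: nn_integral_cong)
  finally show ?thesis ..
qed

lemma nn_integral_qmult_right:
  assumes b: "b \<in> S3" and f [measurable]: "f \<in> borel_measurable borel"
  shows "(\<integral>\<^sup>+ x. f (qmult x b) \<partial>\<nu>) = (\<integral>\<^sup>+ x. f x \<partial>\<nu>)"
proof -
  have "(\<integral>\<^sup>+ x. f (qmult x b) \<partial>\<nu>) = (\<integral>\<^sup>+ x. f (qmult (qcnj x) b) \<partial>\<nu>)"
    using nn_integral_qcnj[of "\<lambda>x. f (qmult (qcnj x) b)"] by (simp add:)
  also have "\<dots> = (\<integral>\<^sup>+ x. f (qcnj (qmult (qcnj b) x)) \<partial>\<nu>)"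
    by (simp add: qcnj_qmult)
  also have "\<dots> = (\<integral>\<^sup>+ x. f x \<partial>\<nu>)"
    using b by (simp add: nn_integral_qmult_left[where f = "\<lambda>a. f (qcnj a)"] nn_integral_qcnj)
  finally show ?thesis .
qed

lemma nn_integral_conjugation:
  assumes a: "a \<in> S3" and f [measurable]: "f \<in> borel_measurable borel"
  shows "(\<integral>\<^sup>+ x. f (qmult a (qmult x (qcnj a))) \<partial>\<nu>) = (\<integral>\<^sup>+ x. f x \<partial>\<nu>)"
  using a by (simp add: qmult_assoc[symmetric] nn_integral_qmult_left[where f = "\<lambda>y. f (qmult y (qcnj a))"]
      nn_integral_qmult_right)

end

lemma haar_S3_distr:
  assumes "prob_space M" and g: "g \<in> measurable M (restrict_space borel S3)"
    and translate: "\<And>a. a \<in> S3 \<Longrightarrow>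
      \<exists>T \<in> measurable M M. distr M M T = M \<and> (\<forall>z \<in> space M. g (T z) = qmult a (g z))"
  shows "haar_S3 (distr M (restrict_space borel S3) g)"
proof (intro haar_S3.intro haar_S3_axioms.intro)
  show "prob_space (distr M (restrict_space borel S3) g)"
    by (rule prob_space.prob_space_distr[OF assms(1) g])
  fix a :: quat assume a: "a \<in> S3"
  obtain T where T: "T \<in> measurable M M" "distr M M T = M" and gT: "\<And>z. z \<in> space M \<Longrightarrow> g (T z) = qmult a (g z)"
    using translate[OF a] by blast
  have qa: "qmult a \<in> measurable (restrict_space borel S3) (restrict_space borel S3)"
    using a by (intro measurable_restrict_space3) (auto simp: norm_qmult)
  have "distr (distr M (restrict_space borel S3) g) (distr M (restrict_space borel S3) g) (qmult a)
      = distr M (restrict_space borel S3) (qmult a \<circ> g)"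
    by (subst distr_distr[OF qa g, symmetric]) (rule distr_cong; simp)
  also have "\<dots> = distr (distr M M T) (restrict_space borel S3) g"
    by (subst distr_distr[OF g T(1)]) (auto simp: gT intro!: distr_cong)
  finally show "distr (distr M (restrict_space borel S3) g) (distr M (restrict_space borel S3) g) (qmult a)
      = distr M (restrict_space borel S3) g"
    by (simp add: T(2))
qed simp_all

lemma nn_integral_pair_haar_S3_qmult_right:
  assumes "haar_S3 \<nu>1" "haar_S3 \<nu>2" and x: "x \<in> S3" and y: "y \<in> S3"
    and f [measurable]: "f \<in> borel_measurable borel"
  shows "(\<integral>\<^sup>+ p. f (qmult (fst p) x, qmult (snd p) y) \<partial>(\<nu>1 \<Otimes>\<^sub>M \<nu>2)) = (\<integral>\<^sup>+ p. f p \<partial>(\<nu>1 \<Otimes>\<^sub>M \<nu>2))"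
proof -
  interpret M1: haar_S3 \<nu>1 by fact
  interpret M2: haar_S3 \<nu>2 by fact
  interpret pair_sigma_finite \<nu>1 \<nu>2
    by (simp add: pair_sigma_finite_def M1.sigma_finite M2.sigma_finite)
  have [measurable]: "(\<lambda>p. p) \<in> borel_measurable (\<nu>1 \<Otimes>\<^sub>M \<nu>2)"
    using measurable_Pair[of fst "\<nu>1 \<Otimes>\<^sub>M \<nu>2" borel snd borel] by (simp add: borel_prod)
  have "(\<integral>\<^sup>+ p. f (qmult (fst p) x, qmult (snd p) y) \<partial>(\<nu>1 \<Otimes>\<^sub>M \<nu>2))
      = (\<integral>\<^sup>+ a. (\<integral>\<^sup>+ b. f (qmult a x, qmult b y) \<partial>\<nu>2) \<partial>\<nu>1)"
    by (subst M2.nn_integral_fst[symmetric]) measurable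
  also have "\<dots> = (\<integral>\<^sup>+ a. (\<integral>\<^sup>+ b. f (qmult a x, b) \<partial>\<nu>2) \<partial>\<nu>1)"
    using y by (simp add: M2.nn_integral_qmult_right[where f = "\<lambda>b. f (qmult _ x, b)"])
  also have "\<dots> = (\<integral>\<^sup>+ b. (\<integral>\<^sup>+ a. f (qmult a x, b) \<partial>\<nu>1) \<partial>\<nu>2)"
    by (rule nn_integral_swap[OF M1.sigma_finite M2.sigma_finite]) measurable
  also have "\<dots> = (\<integral>\<^sup>+ b. (\<integral>\<^sup>+ a. f (a, b) \<partial>\<nu>1) \<partial>\<nu>2)"
    using x by (simp add: M1.nn_integral_qmult_right[where f = "\<lambda>a. f (a, _)"])
  also have "\<dots> = (\<integral>\<^sup>+ p. f p \<partial>(\<nu>1 \<Otimes>\<^sub>M \<nu>2))"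
    by (rule nn_integral_snd) measurable
  finally show ?thesis .
qed

definition fst_marginal :: "(quat \<times> quat) measure \<Rightarrow> quat measure" where
  "fst_marginal \<mu> = distr \<mu> (restrict_space borel S3) fst"

definition snd_marginal :: "(quat \<times> quat) measure \<Rightarrow> quat measure" where
  "snd_marginal \<mu> = distr \<mu> (restrict_space borel S3) snd"

context
  fixes \<mu> :: "(quat \<times> quat) measure"
  assumes haar: "is_haar_qtorus2 \<mu>"
begin

lemma prob_space_haar_qtorus2: "prob_space \<mu>"
  using haar by (simp add: is_haar_qtorus2_def)

lemma space_haar_qtorus2: "space \<mu> = S3 \<times> S3"
  using haar by (simp add: is_haar_qtorus2_def qtorus2_eq)

lemma sets_haar_qtorus2: "sets \<mu> = sets (restrict_space borel (S3 \<times> S3))"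
  using haar by (simp add: is_haar_qtorus2_def qtorus2_eq)

lemma measurable_ident_haar_qtorus2 [measurable]: "(\<lambda>x. x) \<in> measurable \<mu> borel"
  unfolding measurable_cong_sets[OF sets_haar_qtorus2 refl] by (rule measurable_restrict_space1) simp

lemma measurable_translate_haar_qtorus2:
  assumes "a \<in> S3" "b \<in> S3"
  shows "(\<lambda>(x, y). (qmult a x, qmult b y)) \<in> measurable \<mu> \<mu>"
  unfolding measurable_cong_sets[OF sets_haar_qtorus2 sets_haar_qtorus2]
  using assms by (intro measurable_restrict_space3) (measurable, auto simp: norm_qmult)

lemma distr_translate_haar_qtorus2:
  assumes "a \<in> S3" "b \<in> S3"
  shows "distr \<mu> \<mu> (\<lambda>(x, y). (qmult a x, qmult b y)) = \<mu>"
proof -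
  have "(a, b) \<in> qtorus2"
    using assms by (simp add: qtorus2_eq)
  then show ?thesis
    using haar unfolding is_haar_qtorus2_def by blast
qed

lemma nn_integral_translate_haar_qtorus2:
  assumes a: "a \<in> S3" and b: "b \<in> S3" and f [measurable]: "f \<in> borel_measurable borel"
  shows "(\<integral>\<^sup>+ z. f (qmult a (fst z), qmult b (snd z)) \<partial>\<mu>) = (\<integral>\<^sup>+ z. f z \<partial>\<mu>)"
proof -
  have "(\<integral>\<^sup>+ z. f z \<partial>\<mu>) = (\<integral>\<^sup>+ z. f z \<partial>distr \<mu> \<mu> (\<lambda>(x, y). (qmult a x, qmult b y)))"
    by (simp add: distr_translate_haar_qtorus2[OF a b])
  also have "\<dots> = (\<integral>\<^sup>+ z. f ((\<lambda>(x, y). (qmult a x, qmult b y)) z) \<partial>\<mu>)"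
    by (rule nn_integral_distr[OF measurable_translate_haar_qtorus2[OF a b]]) measurable
  finally show ?thesis
    by (simp add: case_prod_beta')
qed

lemma haar_fst_marginal: "haar_S3 (fst_marginal \<mu>)"
  unfolding fst_marginal_def
proof (rule haar_S3_distr[OF prob_space_haar_qtorus2])
  show "fst \<in> measurable \<mu> (restrict_space borel S3)"
    unfolding measurable_cong_sets[OF sets_haar_qtorus2 refl] by (rule measurable_restrict_space3) (measurable, auto)
  fix a :: quat assume "a \<in> S3"
  then show "\<exists>T \<in> measurable \<mu> \<mu>. distr \<mu> \<mu> T = \<mu> \<and> (\<forall>z \<in> space \<mu>. fst (T z) = qmult a (fst z))"
    using measurable_translate_haar_qtorus2[of a qone] distr_translate_haar_qtorus2[of a qone]
    by (intro bexI[of _ "\<lambda>(x, y). (qmult a x, qmult qone y)"]) auto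
qed

lemma haar_snd_marginal: "haar_S3 (snd_marginal \<mu>)"
  unfolding snd_marginal_def
proof (rule haar_S3_distr[OF prob_space_haar_qtorus2])
  show "snd \<in> measurable \<mu> (restrict_space borel S3)"
    unfolding measurable_cong_sets[OF sets_haar_qtorus2 refl] by (rule measurable_restrict_space3) (measurable, auto)
  fix b :: quat assume "b \<in> S3"
  then show "\<exists>T \<in> measurable \<mu> \<mu>. distr \<mu> \<mu> T = \<mu> \<and> (\<forall>z \<in> space \<mu>. snd (T z) = qmult b (snd z))"
    using measurable_translate_haar_qtorus2[of qone b] distr_translate_haar_qtorus2[of qone b]
    by (intro bexI[of _ "\<lambda>(x, y). (qmult qone x, qmult b y)"]) auto
qed

text \<open>Averaging over all translations \<open>(a, b)\<close>, drawn from the product of the marginals, shows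
  that \<open>\<mu>\<close> is the product of its marginals.\<close>

lemma nn_integral_haar_qtorus2:
  assumes f [measurable]: "f \<in> borel_measurable borel"
  shows "(\<integral>\<^sup>+ z. f z \<partial>\<mu>) = (\<integral>\<^sup>+ z. f z \<partial>(fst_marginal \<mu> \<Otimes>\<^sub>M snd_marginal \<mu>))"
proof -
  interpret prob_space \<mu> by (rule prob_space_haar_qtorus2)
  interpret M1: haar_S3 "fst_marginal \<mu>" by (rule haar_fst_marginal)
  interpret M2: haar_S3 "snd_marginal \<mu>" by (rule haar_snd_marginal)
  interpret P: pair_prob_space "fst_marginal \<mu>" "snd_marginal \<mu>"
    by (simp add: pair_prob_space_def pair_sigma_finite_def M1.sigma_finite M2.sigma_finite
        M1.prob_space_axioms M2.prob_space_axioms)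
  let ?P = "fst_marginal \<mu> \<Otimes>\<^sub>M snd_marginal \<mu>"
  have "(\<integral>\<^sup>+ z. f z \<partial>\<mu>) = (\<integral>\<^sup>+ p. (\<integral>\<^sup>+ z. f z \<partial>\<mu>) \<partial>?P)"
    by (simp add: P.P.emeasure_space_1)
  also have "\<dots> = (\<integral>\<^sup>+ p. (\<integral>\<^sup>+ z. f (qmult (fst p) (fst z), qmult (snd p) (snd z)) \<partial>\<mu>) \<partial>?P)"
    by (intro nn_integral_cong nn_integral_translate_haar_qtorus2[symmetric])
       (auto simp: space_pair_measure M1.space_eq M2.space_eq)
  also have "\<dots> = (\<integral>\<^sup>+ z. (\<integral>\<^sup>+ p. f (qmult (fst p) (fst z), qmult (snd p) (snd z)) \<partial>?P) \<partial>\<mu>)"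
    by (rule nn_integral_swap[OF prob_space_imp_sigma_finite prob_space_imp_sigma_finite])
       (simp_all add: P.P.prob_space_axioms prob_space_axioms)
  also have "\<dots> = (\<integral>\<^sup>+ z. (\<integral>\<^sup>+ p. f p \<partial>?P) \<partial>\<mu>)"
    by (intro nn_integral_cong nn_integral_pair_haar_S3_qmult_right[OF haar_fst_marginal haar_snd_marginal])
       (auto simp: space_haar_qtorus2)
  also have "\<dots> = (\<integral>\<^sup>+ z. f z \<partial>?P)"
    by (simp add: emeasure_space_1)
  finally show ?thesis .
qed

end

section \<open>Moments of the Haar measure\<close>

lemma sum_even_powers_reindex:
  fixes g :: "nat \<Rightarrow> 'a::comm_semiring_1"
  shows "(\<Sum>j\<le>n. g j * l ^ (2 * j)) = (\<Sum>k\<le>2 * n. (if even k then g (k div 2) else 0) * l ^ k)"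
proof (induction n)
  case (Suc n)
  have "2 * Suc n = Suc (Suc (2 * n))"
    by simp
  then show ?case
    using Suc by simp
qed simp

definition binom_half :: "nat \<Rightarrow> real" where
  "binom_half n = fact (2 * n) / (4 ^ n * (fact n)\<^sup>2)"

lemma binom_half_0 [simp]: "binom_half 0 = 1"
  by (simp add: binom_half_def)

lemma binom_half_Suc: "binom_half (Suc k) = binom_half k * (2 * real k + 1) / (2 * real k + 2)"
proof -
  have "fact (2 * Suc k) = (2 * real k + 2) * (2 * real k + 1) * (fact (2 * k) :: real)"
    and "fact (Suc k) = (real k + 1) * (fact k :: real)"
    by (simp_all add: fact_Suc algebra_simps)
  then show ?thesis
    unfolding binom_half_def by (simp add: divide_simps power2_eq_square) (simp add: algebra_simps)
qed

lemma gbinomial_Suc_right: "(a gchoose Suc k) = (a gchoose k) * (a - of_nat k) / (of_nat k + 1)"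
  for a :: "'a::field_char_0"
proof -
  have "(of_nat k + 1) * (a gchoose Suc k) = (a gchoose k) * (a - of_nat k)"
    using gbinomial_mult_1[of a k] by (simp add: algebra_simps)
  moreover have "(of_nat k + 1 :: 'a) \<noteq> 0"
    using of_nat_neq_0[of k, where 'a = 'a] by (simp add: add.commute)
  ultimately show ?thesis
    by (simp add: field_simps)
qed

lemma binom_half_gchoose: "binom_half k = (-1) ^ k * ((-1/2) gchoose k)"
  by (induction k) (simp_all add: binom_half_Suc gbinomial_Suc_right field_simps)

text \<open>The generating function of \<open>binom_half\<close> is \<open>(1 - t)\<^sup>-\<^sup>1\<^sup>/\<^sup>2\<close>, whose square is \<open>(1 - t)\<^sup>-\<^sup>1\<close>.\<close>

lemma binom_half_convolution: "(\<Sum>j\<le>n. binom_half j * binom_half (n - j)) = 1"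
proof -
  have "binom_half j * binom_half (n - j) = (-1) ^ n * (((-1/2) gchoose j) * ((-1/2) gchoose (n - j)))"
    if "j \<le> n" for j
  proof -
    have "(-1::real) ^ j * (-1) ^ (n - j) = (-1) ^ n"
      using that by (simp add: power_add[symmetric])
    then show ?thesis
      by (simp add: binom_half_gchoose algebra_simps)
  qed
  then have "(\<Sum>j\<le>n. binom_half j * binom_half (n - j))
      = (-1) ^ n * (\<Sum>j\<le>n. ((-1/2::real) gchoose j) * ((-1/2) gchoose (n - j)))"
    by (simp add: sum_distrib_left)
  also have "\<dots> = (-1) ^ n * ((-1::real) gchoose n)"
    using gbinomial_Vandermonde[of "-1/2::real" "-1/2" n] by (simp add: atMost_atLeast0)
  also have "((-1::real) gchoose n) = (-1) ^ n"
    using gbinomial_minus[of "1::real" n] binomial_gbinomial[of n n, where 'a = real] by simp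
  finally show ?thesis
    by (simp add: power_mult_distrib[symmetric])
qed

lemma binom_half_choose:
  assumes "j \<le> n"
  shows "real (n choose j) ^ 2 * binom_half n = real (2 * n choose (2 * j)) * binom_half j * binom_half (n - j)"
proof -
  have a: "real (n choose j) = fact n / (fact j * fact (n - j))"
    and b: "real (2 * n choose (2 * j)) = fact (2 * n) / (fact (2 * j) * fact (2 * n - 2 * j))"
    using assms by (simp_all add: binomial_fact)
  have c: "2 * n - 2 * j = 2 * (n - j)" and d: "(4::real) ^ n = 4 ^ j * 4 ^ (n - j)"
    using assms by (simp_all add: power_add[symmetric])
  show ?thesis
    unfolding a b c d binom_half_def by (simp add: field_simps power2_eq_square)
qed

context haar_S3
begin

lemma integrable_bounded:
  fixes f :: "quat \<Rightarrow> real"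
  assumes [measurable]: "f \<in> borel_measurable borel" and "\<And>x. norm x = 1 \<Longrightarrow> \<bar>f x\<bar> \<le> B"
  shows "integrable \<nu> f"
  using assms(2) by (intro integrable_const_bound[where B = B]) (auto simp: norm_in_space)

lemma integrable_inner_powers: "integrable \<nu> (\<lambda>x. (inner x u) ^ m * (inner x v) ^ k)"
proof (rule integrable_bounded[where B = "norm u ^ m * norm v ^ k"])
  have bound: "\<bar>inner x w\<bar> \<le> norm w" if "norm x = 1" for x w :: quat
    using Cauchy_Schwarz_ineq2[of x w] that by simp
  show "\<bar>(inner x u) ^ m * (inner x v) ^ k\<bar> \<le> norm u ^ m * norm v ^ k" if "norm x = 1" for x
    using bound[OF that, of u] bound[OF that, of v] by (auto simp: abs_mult power_abs intro!: mult_mono power_mono)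
qed measurable

definition re_moment :: "nat \<Rightarrow> real" where
  "re_moment m = (\<integral>x. (q0 x) ^ m \<partial>\<nu>)"

lemma integral_inner_power: "(\<integral>x. (inner x u) ^ m \<partial>\<nu>) = (norm u) ^ m * re_moment m"
proof (cases "u = 0")
  case True
  then show ?thesis
    by (cases m) (auto simp: re_moment_def)
next
  case False
  define w where "w = (1 / norm u) *\<^sub>R u"
  have w: "norm w = 1" "u = norm u *\<^sub>R w"
    using False by (simp_all add: w_def)
  have "inner (qmult w x) w = q0 x" for x
    using inner_qmult_left[of w x qone] w by simp
  then have "(\<integral>x. (inner x w) ^ m \<partial>\<nu>) = re_moment m"
    using w integral_qmult_left[of w "\<lambda>x. (inner x w) ^ m"] by (simp add: re_moment_def)
  then show ?thesis
    by (subst w(2)) (simp add: power_mult_distrib)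
qed

text \<open>Comparing coefficients of \<open>l\<close> in
  \<open>\<integral> \<langle>x, e + l f\<rangle>\<^sup>2\<^sup>n d\<nu> = (1 + l\<^sup>2)\<^sup>n re_moment (2 n)\<close>.\<close>

lemma mixed_moment:
  assumes e: "norm e = 1" and f: "norm f = 1" and ef: "inner e f = 0" and k: "k \<le> 2 * n"
  shows "real (2 * n choose k) * (\<integral>x. (inner x e) ^ (2 * n - k) * (inner x f) ^ k \<partial>\<nu>)
       = re_moment (2 * n) * (if even k then real (n choose (k div 2)) else 0)"
proof -
  define M where "M k = (\<integral>x. (inner x e) ^ (2 * n - k) * (inner x f) ^ k \<partial>\<nu>)" for k
  have norm_sq: "(norm (e + l *\<^sub>R f))\<^sup>2 = 1 + l\<^sup>2" for l
  proof -
    have "inner e e = 1" "inner f f = 1"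
      using e f by (simp_all add: power2_norm_eq_inner[symmetric])
    then show ?thesis
      using ef unfolding power2_norm_eq_inner
      by (simp add: inner_add_left inner_add_right inner_commute power2_eq_square)
  qed
  have norm_pow: "(norm (e + l *\<^sub>R f)) ^ (2 * n)
      = (\<Sum>k\<le>2 * n. (if even k then real (n choose (k div 2)) else 0) * l ^ k)" for l
  proof -
    have "(norm (e + l *\<^sub>R f)) ^ (2 * n) = (l\<^sup>2 + 1) ^ n"
      by (simp add: power_mult norm_sq add.commute)
    also have "\<dots> = (\<Sum>j\<le>n. real (n choose j) * l ^ (2 * j))"
      by (simp add: binomial_ring power_mult)
    finally show ?thesis
      by (simp add: sum_even_powers_reindex)
  qed
  have "(\<Sum>k\<le>2 * n. (real (2 * n choose k) * M k) * l ^ k)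
      = (\<Sum>k\<le>2 * n. (re_moment (2 * n) * (if even k then real (n choose (k div 2)) else 0)) * l ^ k)"
    for l :: real
  proof -
    have "(\<Sum>k\<le>2 * n. (real (2 * n choose k) * M k) * l ^ k) = (\<Sum>k\<le>2 * n. real (2 * n choose k) * l ^ k * M k)"
      by (simp add: mult_ac)
    also have "\<dots> = (\<integral>x. (\<Sum>k\<le>2 * n. real (2 * n choose k) * l ^ k * ((inner x e) ^ (2 * n - k) * (inner x f) ^ k)) \<partial>\<nu>)"
      by (simp add: M_def Bochner_Integration.integral_sum integrable_inner_powers)
    also have "\<dots> = (\<integral>x. (inner x (e + l *\<^sub>R f)) ^ (2 * n) \<partial>\<nu>)"
    proof (rule Bochner_Integration.integral_cong[OF refl])
      fix x
      have "(inner x (e + l *\<^sub>R f)) ^ (2 * n) = (l * inner x f + inner x e) ^ (2 * n)"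
        by (simp add: inner_add_right add.commute)
      then show "(\<Sum>k\<le>2 * n. real (2 * n choose k) * l ^ k * ((inner x e) ^ (2 * n - k) * (inner x f) ^ k))
          = (inner x (e + l *\<^sub>R f)) ^ (2 * n)"
        unfolding binomial_ring by (simp add: power_mult_distrib mult_ac)
    qed
    also have "\<dots> = (norm (e + l *\<^sub>R f)) ^ (2 * n) * re_moment (2 * n)"
      by (rule integral_inner_power)
    finally show ?thesis
      unfolding norm_pow by (simp add: sum_distrib_left sum_distrib_right mult_ac)
  qed
  then have "\<forall>i\<le>2 * n. real (2 * n choose i) * M i
      = re_moment (2 * n) * (if even i then real (n choose (i div 2)) else 0)"
    by (subst polyfun_eq_coeffs[symmetric]) blast
  then show ?thesis
    using k unfolding M_def by blast
qed

lemma integral_q0_power_inner_sq: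
  assumes "norm f = 1" "inner qone f = 0"
  shows "(\<integral>x. (q0 x) ^ (2 * m) * (inner x f)\<^sup>2 \<partial>\<nu>) = re_moment (2 * Suc m) / (2 * real m + 1)"
proof -
  define I where "I = (\<integral>x. (q0 x) ^ (2 * m) * (inner x f)\<^sup>2 \<partial>\<nu>)"
  have "real (2 * Suc m choose 2) * I = re_moment (2 * Suc m) * real (Suc m)"
    using mixed_moment[of qone f 2 "Suc m"] assms by (simp add: I_def)
  moreover have "real (2 * Suc m choose 2) = real (Suc m) * (2 * real m + 1)"
    by (simp add: choose_two of_nat_diff algebra_simps)
  ultimately have "real (Suc m) * ((2 * real m + 1) * I) = real (Suc m) * re_moment (2 * Suc m)"
    by (simp only: mult_ac)
  then have "(2 * real m + 1) * I = re_moment (2 * Suc m)"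
    by (subst (asm) mult_cancel_left) simp
  then show ?thesis
    by (simp add: I_def field_simps)
qed

lemma re_moment_Suc: "re_moment (2 * Suc m) = re_moment (2 * m) * (2 * real m + 1) / (2 * real m + 4)"
proof -
  have "re_moment (2 * m) = (\<integral>x. (q0 x) ^ (2 * m) * (norm x)\<^sup>2 \<partial>\<nu>)"
    unfolding re_moment_def by (rule Bochner_Integration.integral_cong) (simp_all add: norm_in_space)
  also have "\<dots> = (\<integral>x. (q0 x) ^ (2 * Suc m) + (q0 x) ^ (2 * m) * (inner x qi)\<^sup>2
      + (q0 x) ^ (2 * m) * (inner x qj)\<^sup>2 + (q0 x) ^ (2 * m) * (inner x qk)\<^sup>2 \<partial>\<nu>)"
    by (simp add: norm_quat_sq algebra_simps power_add[symmetric])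
  also have "\<dots> = re_moment (2 * Suc m) + 3 * (re_moment (2 * Suc m) / (2 * real m + 1))"
    using integrable_inner_powers[of qone "2 * Suc m" _ 0] integrable_inner_powers[of qone "2 * m" qi 2]
      integrable_inner_powers[of qone "2 * m" qj 2] integrable_inner_powers[of qone "2 * m" qk 2]
      integral_q0_power_inner_sq[of qi m] integral_q0_power_inner_sq[of qj m]
      integral_q0_power_inner_sq[of qk m]
    by (simp add: re_moment_def)
  finally show ?thesis
    by (simp add: field_simps)
qed

lemma re_moment_even: "re_moment (2 * n) = binom_half n / (real n + 1)"
proof (induction n)
  case 0
  then show ?case
    by (simp add: re_moment_def prob_space)
next
  case (Suc n)
  show ?case
    unfolding re_moment_Suc Suc.IH binom_half_Suc by (simp add: field_simps)
qed

end

section \<open>The \<open>jk\<close>-part of a unit quaternion is uniformly distributed\<close>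

definition sq_jk :: "quat \<Rightarrow> real" where
  "sq_jk x = (q2 x)\<^sup>2 + (q3 x)\<^sup>2"

lemma borel_measurable_sq_jk [measurable]: "sq_jk \<in> borel_measurable borel"
  unfolding sq_jk_def by measurable

lemma q0_q1_sq_eq: "norm x = 1 \<Longrightarrow> (q0 x)\<^sup>2 + (q1 x)\<^sup>2 = 1 - sq_jk x"
  using norm_quat_sq[of x] by (simp add: sq_jk_def)

lemma sq_jk_bounds: "norm x = 1 \<Longrightarrow> 0 \<le> sq_jk x \<and> sq_jk x \<le> 1"
  using q0_q1_sq_eq[of x] by (simp add: sq_jk_def) (smt (verit) zero_le_power2)

lemma has_integral_polynomial_01:
  "((\<lambda>t. \<Sum>i\<le>N. a i * t ^ i) has_integral (\<Sum>i\<le>N. a i / (real i + 1))) {0..1::real}"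
proof -
  have "((\<lambda>t. \<Sum>i\<le>N. a i / (real i + 1) * t ^ Suc i) has_real_derivative (\<Sum>i\<le>N. a i * x ^ i))
      (at x within {0..1})" for x :: real
    by (rule derivative_eq_intros refl | simp add: field_simps)+ (rule sum.cong; simp add: field_simps)
  from fundamental_theorem_of_calculus[OF _ this[unfolded has_real_derivative_iff_has_vector_derivative]]
  show ?thesis
    by simp
qed

lemma has_integral_1_minus_power_01: "((\<lambda>t. (1 - t) ^ n) has_integral 1 / (real n + 1)) {0..1::real}"
proof -
  have "((\<lambda>t. - (1 / (real n + 1)) * (1 - t) ^ Suc n) has_real_derivative (1 - x) ^ n) (at x within {0..1})"
    for x :: real
    by (rule derivative_eq_intros refl | simp add: field_simps)+
  from fundamental_theorem_of_calculus[OF _ this[unfolded has_real_derivative_iff_has_vector_derivative]]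
  show ?thesis
    by simp
qed

lemma (in prob_space) emeasure_level_set_zero_if_moments:
  fixes h :: "'a \<Rightarrow> real"
  assumes [measurable]: "h \<in> borel_measurable M" and bounds: "\<And>x. x \<in> space M \<Longrightarrow> 0 \<le> h x \<and> h x \<le> 1"
    and moments: "\<And>n. (\<integral>x. (h x) ^ n \<partial>M) = 1 / (real n + 1)"
  shows "emeasure M {x \<in> space M. h x = 1} = 0"
proof -
  let ?A = "{x \<in> space M. h x = 1}"
  have "prob ?A \<le> 1 / (real n + 1)" for n
  proof -
    have "prob ?A = (\<integral>x. indicator ?A x \<partial>M)"
      by simp
    also have "\<dots> \<le> (\<integral>x. (h x) ^ n \<partial>M)"
      using bounds
      by (intro integral_mono integrable_const_bound[where B = 1]) (auto simp: indicator_def power_le_one)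
    finally show ?thesis
      by (simp add: moments)
  qed
  then have "prob ?A \<le> 0"
    by (intro tendsto_lowerbound[OF LIMSEQ_inverse_real_of_nat_add]) (simp_all add: inverse_eq_divide add.commute)
  then show ?thesis
    by (simp add: emeasure_eq_measure measure_nonneg antisym)
qed

context haar_S3
begin

lemma sq_jk_bounds_space: "x \<in> space \<nu> \<Longrightarrow> 0 \<le> sq_jk x \<and> sq_jk x \<le> 1"
  by (simp add: sq_jk_bounds norm_in_space)

lemma integral_q2_q3_powers:
  assumes j: "j \<le> n"
  shows "real (n choose j) * (\<integral>x. (q2 x) ^ (2 * n - 2 * j) * (q3 x) ^ (2 * j) \<partial>\<nu>)
       = binom_half j * binom_half (n - j) / (real n + 1)"
proof -
  define I where "I = (\<integral>x. (q2 x) ^ (2 * n - 2 * j) * (q3 x) ^ (2 * j) \<partial>\<nu>)"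
  define C where "C = real (2 * n choose (2 * j))"
  have "C > 0"
    using j by (simp add: C_def)
  have CI: "C * I = binom_half n * real (n choose j) / (real n + 1)"
    using mixed_moment[of qj qk "2 * j" n] j by (simp add: I_def C_def re_moment_even)
  have "C * (real (n choose j) * I) = real (n choose j) * (C * I)"
    by (simp only: mult_ac)
  also have "\<dots> = (real (n choose j))\<^sup>2 * binom_half n / (real n + 1)"
    by (simp add: CI power2_eq_square)
  also have "\<dots> = C * (binom_half j * binom_half (n - j) / (real n + 1))"
    by (simp add: binom_half_choose[OF j] C_def)
  finally have "C * (real (n choose j) * I) = C * (binom_half j * binom_half (n - j) / (real n + 1))" .
  then show ?thesis
    using \<open>C > 0\<close> by (subst (asm) mult_cancel_left) (simp add: I_def)
qed

lemma integral_sq_jk_power: "(\<integral>x. (sq_jk x) ^ n \<partial>\<nu>) = 1 / (real n + 1)"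
proof -
  have "(\<integral>x. (sq_jk x) ^ n \<partial>\<nu>)
      = (\<integral>x. (\<Sum>j\<le>n. real (n choose j) * ((q2 x) ^ (2 * n - 2 * j) * (q3 x) ^ (2 * j))) \<partial>\<nu>)"
    unfolding sq_jk_def by (subst add.commute, subst binomial_ring)
      (auto intro!: Bochner_Integration.integral_cong sum.cong simp: power_mult[symmetric] diff_mult_distrib diff_mult_distrib2 mult_ac)
  also have "\<dots> = (\<Sum>j\<le>n. real (n choose j) * (\<integral>x. (q2 x) ^ (2 * n - 2 * j) * (q3 x) ^ (2 * j) \<partial>\<nu>))"
    using integrable_inner_powers[of qj _ qk] by (simp add: Bochner_Integration.integral_sum)
  also have "\<dots> = (\<Sum>j\<le>n. binom_half j * binom_half (n - j)) / (real n + 1)"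
    by (simp add: integral_q2_q3_powers sum_divide_distrib)
  finally show ?thesis
    by (simp add: binom_half_convolution)
qed

lemma integrable_sq_jk_power: "integrable \<nu> (\<lambda>x. (sq_jk x) ^ i)"
  by (rule integrable_bounded[where B = 1]) (simp_all add: sq_jk_bounds power_le_one)

lemma integral_sq_jk_polynomial:
  "(\<integral>x. (\<Sum>i\<le>N. a i * (sq_jk x) ^ i) \<partial>\<nu>) = integral {0..1} (\<lambda>t. \<Sum>i\<le>N. a i * t ^ i)"
  by (simp add: Bochner_Integration.integral_sum integrable_sq_jk_power integral_sq_jk_power
      integral_unique[OF has_integral_polynomial_01])

text \<open>By the moment computation, \<open>sq_jk\<close> is uniformly distributed on \<open>[0, 1]\<close> under \<open>\<nu>\<close>;
  the Stone--Weierstrass theorem passes from polynomials to continuous functions.\<close>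

lemma integral_sq_jk_continuous:
  fixes g :: "real \<Rightarrow> real"
  assumes [measurable]: "g \<in> borel_measurable borel" and cont: "continuous_on {0..1} g"
  shows "integrable \<nu> (\<lambda>x. g (sq_jk x))" "(\<integral>x. g (sq_jk x) \<partial>\<nu>) = integral {0..1} g"
proof -
  obtain B where B: "\<forall>t \<in> {0..1}. \<bar>g t\<bar> \<le> B"
    using compact_imp_bounded[OF compact_continuous_image[OF cont compact_Icc]]
    unfolding bounded_iff real_norm_def by blast
  show ig: "integrable \<nu> (\<lambda>x. g (sq_jk x))"
    by (rule integrable_bounded[where B = B]) (simp_all add: B sq_jk_bounds)
  have close: "\<bar>(\<integral>x. g (sq_jk x) \<partial>\<nu>) - integral {0..1} g\<bar> \<le> 2 * e" if "e > 0" for e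
  proof -
    obtain a N where approx: "\<And>t. t \<in> {0..1} \<Longrightarrow> \<bar>g t - (\<Sum>i\<le>N. a i * t ^ i)\<bar> < e"
      using Stone_Weierstrass_real_polynomial_function[OF compact_Icc cont \<open>e > 0\<close>]
        real_polynomial_function_imp_sum by metis
    define p where "p t = (\<Sum>i\<le>N. a i * t ^ i)" for t
    have ip: "integrable \<nu> (\<lambda>x. p (sq_jk x))"
      unfolding p_def by (intro Bochner_Integration.integrable_sum integrable_mult_right integrable_sq_jk_power)
    have "\<bar>(\<integral>x. g (sq_jk x) \<partial>\<nu>) - (\<integral>x. p (sq_jk x) \<partial>\<nu>)\<bar> \<le> (\<integral>x. \<bar>g (sq_jk x) - p (sq_jk x)\<bar> \<partial>\<nu>)"
      using ig ip by (simp flip: Bochner_Integration.integral_diff)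
    also have "\<dots> \<le> (\<integral>x. e \<partial>\<nu>)"
      using approx ig ip
      by (intro integral_mono) (auto simp: p_def sq_jk_bounds_space less_imp_le)
    finally have 1: "\<bar>(\<integral>x. g (sq_jk x) \<partial>\<nu>) - (\<integral>x. p (sq_jk x) \<partial>\<nu>)\<bar> \<le> e"
      by (simp add: prob_space)
    have cp: "continuous_on {0..1} p"
      unfolding p_def by (intro continuous_intros)
    have "\<bar>integral {0..1} g - integral {0..1} p\<bar> = norm (integral {0..1} (\<lambda>t. g t - p t))"
      using integrable_continuous_interval[OF cont] integrable_continuous_interval[OF cp]
      by (simp add: integral_diff)
    also have "\<dots> \<le> e"
      using integral_bound[of 0 1 "\<lambda>t. g t - p t" e] continuous_on_diff[OF cont cp] approx
      by (simp add: p_def less_imp_le)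
    finally have 2: "\<bar>integral {0..1} g - integral {0..1} p\<bar> \<le> e" .
    show ?thesis
      using 1 2 integral_sq_jk_polynomial[of a N] unfolding p_def by linarith
  qed
  have "\<bar>(\<integral>x. g (sq_jk x) \<partial>\<nu>) - integral {0..1} g\<bar> \<le> 0"
  proof (rule field_le_epsilon)
    fix e :: real assume "0 < e"
    then show "\<bar>(\<integral>x. g (sq_jk x) \<partial>\<nu>) - integral {0..1} g\<bar> \<le> 0 + e"
      using close[of "e / 2"] by simp
  qed
  then show "(\<integral>x. g (sq_jk x) \<partial>\<nu>) = integral {0..1} g"
    by simp
qed

lemma AE_sq_jk_less_1: "AE x in \<nu>. sq_jk x < 1"
proof -
  have "emeasure \<nu> {x \<in> space \<nu>. sq_jk x = 1} = 0"
    by (rule emeasure_level_set_zero_if_moments) (simp_all add: sq_jk_bounds_space integral_sq_jk_power)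
  then have "AE x in \<nu>. sq_jk x \<noteq> 1"
    by (intro AE_I[where N = "{x \<in> space \<nu>. sq_jk x = 1}"]) auto
  then show ?thesis
    using AE_space by eventually_elim (use sq_jk_bounds_space in force)
qed

lemma AE_sq_jk_pos: "AE x in \<nu>. sq_jk x > 0"
proof -
  have "(\<integral>x. (1 - sq_jk x) ^ n \<partial>\<nu>) = 1 / (real n + 1)" for n
    using integral_unique[OF has_integral_1_minus_power_01]
    by (simp add: integral_sq_jk_continuous(2)[of "\<lambda>t. (1 - t) ^ n"] continuous_intros)
  then have "emeasure \<nu> {x \<in> space \<nu>. 1 - sq_jk x = 1} = 0"
    by (intro emeasure_level_set_zero_if_moments) (simp_all add: sq_jk_bounds_space)
  then have "AE x in \<nu>. sq_jk x \<noteq> 0"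
    by (intro AE_I[where N = "{x \<in> space \<nu>. 1 - sq_jk x = 1}"]) auto
  then show ?thesis
    using AE_space by eventually_elim (use sq_jk_bounds_space in force)
qed

end

section \<open>Averages over circles\<close>

definition angle_measure :: "real measure" where
  "angle_measure = restrict_space lborel {0..2 * pi}"

lemma borel_measurable_angle_measure [measurable (raw)]:
  "f \<in> borel_measurable borel \<Longrightarrow> f \<in> borel_measurable angle_measure"
  unfolding angle_measure_def by (rule measurable_restrict_space1) simp

lemma emeasure_angle_measure [simp]: "emeasure angle_measure (space angle_measure) = ennreal (2 * pi)"
  by (simp add: angle_measure_def emeasure_restrict_space)

interpretation angle_measure: finite_measure angle_measure
  by (rule finite_measureI) (simp add: emeasure_angle_measure)

lemma measure_angle_measure [simp]: "measure angle_measure (space angle_measure) = 2 * pi"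
  by (simp add: measure_def emeasure_angle_measure)

lemma integral_angle_measure_lborel:
  fixes f :: "real \<Rightarrow> real"
  shows "(\<integral>t. f t \<partial>angle_measure) = (\<integral>t. f t * indicator {0..2 * pi} t \<partial>lborel)"
  unfolding angle_measure_def by (subst integral_restrict_space) (auto simp: mult.commute)

lemma integral_angle_measure_cos_sin:
  assumes "n \<noteq> 0"
  shows "(\<integral>t. cos (real n * t) \<partial>angle_measure) = 0" "(\<integral>t. sin (real n * t) \<partial>angle_measure) = 0"
proof -
  have "sin (real n * (2 * pi)) = 0" "cos (real n * (2 * pi)) = 1"
    using sin_npi[of "2 * n"] cos_npi[of "2 * n"] by (simp_all add: mult_ac)
  moreover have "(\<integral>t. cos (real n * t) * indicator {0..2 * pi} t \<partial>lborel)
      = sin (real n * (2 * pi)) / real n - sin (real n * 0) / real n"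
    using assms by (intro integral_FTC_Icc_real) (auto intro!: derivative_eq_intros continuous_intros)
  moreover have "(\<integral>t. sin (real n * t) * indicator {0..2 * pi} t \<partial>lborel)
      = - cos (real n * (2 * pi)) / real n - (- cos (real n * 0) / real n)"
    using assms by (intro integral_FTC_Icc_real) (auto intro!: derivative_eq_intros continuous_intros)
  ultimately show "(\<integral>t. cos (real n * t) \<partial>angle_measure) = 0" "(\<integral>t. sin (real n * t) \<partial>angle_measure) = 0"
    by (simp_all add: integral_angle_measure_lborel)
qed

lemma integral_angle_measure_Re_cis_power:
  assumes "n \<noteq> 0"
  shows "(\<integral>t. Re ((cis t * v) ^ n) \<partial>angle_measure) = 0"
proof -
  have "Re ((cis t * v) ^ n) = Re (v ^ n) * cos (real n * t) - Im (v ^ n) * sin (real n * t)" for t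
    by (simp add: power_mult_distrib cos_n_Re_cis_pow_n sin_n_Im_cis_pow_n)
  moreover have "integrable angle_measure (\<lambda>t. cos (real n * t))" "integrable angle_measure (\<lambda>t. sin (real n * t))"
    by (intro angle_measure.integrable_const_bound[where B = 1]; simp)+
  ultimately show ?thesis
    using integral_angle_measure_cos_sin[OF assms] by simp
qed

lemma ln_norm_1_minus_sums:
  assumes "cmod w < 1"
  shows "(\<lambda>n. - Re (w ^ n) / real n) sums ln (cmod (1 - w))"
proof -
  have "1 - w \<noteq> 0"
    using assms by auto
  moreover have "(\<lambda>n. Re (- (w ^ n) / of_nat n)) sums Re (ln (1 - w))"
    using sums_Re[OF Ln_series'[of "- w"]] assms by simp
  ultimately show ?thesis
    by simp
qed

text \<open>Jensen's formula for the function \<open>1 - w v\<close>, which has no zero in the unit disc.\<close>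

lemma integral_angle_measure_ln_norm_1_minus_cis:
  assumes v: "cmod v < 1"
  shows "integrable angle_measure (\<lambda>t. ln (cmod (1 - cis t * v)))"
    "(\<integral>t. ln (cmod (1 - cis t * v)) \<partial>angle_measure) = 0"
proof -
  define f where "f n t = - Re ((cis t * v) ^ n) / real n" for n t
  have sums: "(\<lambda>n. f n t) sums ln (cmod (1 - cis t * v))" for t
    unfolding f_def using v by (intro ln_norm_1_minus_sums) (simp add: norm_mult)
  have bound: "\<bar>f n t\<bar> \<le> cmod v ^ n" for n t
  proof -
    have "\<bar>Re ((cis t * v) ^ n)\<bar> \<le> cmod v ^ n"
      using abs_Re_le_cmod[of "(cis t * v) ^ n"] by (simp add: norm_power norm_mult)
    moreover have "\<bar>Re ((cis t * v) ^ n)\<bar> / real n \<le> \<bar>Re ((cis t * v) ^ n)\<bar>" if "n \<noteq> 0"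
      using divide_left_mono[of 1 "real n" "\<bar>Re ((cis t * v) ^ n)\<bar>"] that by simp
    ultimately show ?thesis
      unfolding f_def by (cases "n = 0") (auto simp: abs_divide)
  qed
  have [measurable]: "cis \<in> borel_measurable borel"
    by (intro borel_measurable_continuous_onI continuous_intros)
  have [measurable]: "(\<lambda>t. f n t) \<in> borel_measurable borel" for n
    unfolding f_def by measurable
  have integrable: "integrable angle_measure (f n)" for n
    using bound by (intro angle_measure.integrable_const_bound[where B = "cmod v ^ n"]) auto
  have geometric: "summable (\<lambda>n. cmod v ^ n)"
    using v by simp
  have norm_integral: "norm (\<integral>t. norm (f n t) \<partial>angle_measure) \<le> 2 * pi * cmod v ^ n" for n
  proof -
    have "(\<integral>t. norm (f n t) \<partial>angle_measure) \<le> (\<integral>t. cmod v ^ n \<partial>angle_measure)"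
      using bound integrable by (intro integral_mono) auto
    then show ?thesis
      by simp
  qed
  have summable: "summable (\<lambda>n. (\<integral>t. norm (f n t) \<partial>angle_measure))"
    by (rule summable_comparison_test'[OF summable_mult[OF geometric, of "2 * pi"] norm_integral])
  have pointwise: "AE t in angle_measure. summable (\<lambda>n. norm (f n t))"
    using bound by (intro AE_I2 summable_comparison_test'[OF geometric, of 0]) simp
  have eq: "ln (cmod (1 - cis t * v)) = (\<Sum>n. f n t)" for t
    using sums by (simp add: sums_iff)
  show "integrable angle_measure (\<lambda>t. ln (cmod (1 - cis t * v)))"
    unfolding eq by (rule integrable_suminf[OF integrable pointwise summable])
  have "(\<integral>t. ln (cmod (1 - cis t * v)) \<partial>angle_measure) = (\<Sum>n. (\<integral>t. f n t \<partial>angle_measure))"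
    unfolding eq by (rule integral_suminf[OF integrable pointwise summable])
  also have "(\<lambda>n. \<integral>t. f n t \<partial>angle_measure) = (\<lambda>n. 0)"
  proof
    show "(\<integral>t. f n t \<partial>angle_measure) = 0" for n
      by (cases "n = 0") (simp_all add: f_def integral_angle_measure_Re_cis_power)
  qed
  finally show "(\<integral>t. ln (cmod (1 - cis t * v)) \<partial>angle_measure) = 0"
    by simp
qed

lemma has_integral_ln_1_plus_sqrt: "((\<lambda>t. ln (1 + sqrt t)) has_integral 1 / 2) {0..1::real}"
proof -
  define F where "F t = (t - 1) * ln (1 + sqrt t) - t / 2 + sqrt t" for t :: real
  have alg: "inverse (sqrt t) * (t - 1) / (2 + sqrt t * 2) + (inverse (sqrt t) / 2 - 1 / 2) = 0"
    if "0 < t" for t :: real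
  proof -
    have "inverse u * (u\<^sup>2 - 1) / (2 + u * 2) + (inverse u / 2 - 1 / 2) = 0" if "u > 0" for u :: real
      using that by (simp add: divide_simps power2_eq_square) (simp add: algebra_simps)
    from this[of "sqrt t"] that show ?thesis
      by simp
  qed
  have "0 < t \<Longrightarrow> (F has_real_derivative ln (1 + sqrt t)) (at t)" for t
    unfolding F_def by (rule derivative_eq_intros refl | simp add: add_pos_nonneg)+ (simp add: alg)
  moreover have "continuous_on {0..1} F"
    unfolding F_def by (intro continuous_intros) (auto simp: add_nonneg_eq_0_iff)
  ultimately have "((\<lambda>t. ln (1 + sqrt t)) has_integral F 1 - F 0) {0..1::real}"
    by (intro fundamental_theorem_of_calculus_interior)
       (auto simp: has_real_derivative_iff_has_vector_derivative[symmetric])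
  then show ?thesis
    by (simp add: F_def)
qed

definition cisq :: "real \<Rightarrow> quat" where
  "cisq t = (cos t, sin t, 0, 0)"

lemma norm_cisq [simp]: "norm (cisq t) = 1"
  by (simp add: cisq_def norm_Pair)

lemma q_cisq [simp]: "q0 (cisq t) = cos t" "q1 (cisq t) = sin t" "q2 (cisq t) = 0" "q3 (cisq t) = 0"
  by (simp_all add: cisq_def)

lemma borel_measurable_cisq [measurable]: "cisq \<in> borel_measurable borel"
  unfolding cisq_def by (intro borel_measurable_continuous_onI continuous_intros continuous_on_Pair)

lemma norm_qone_minus_sq: "norm x = 1 \<Longrightarrow> (norm (qone - x))\<^sup>2 = 2 - 2 * q0 x"
  using norm_quat_sq[of x] unfolding norm_quat_sq[of "qone - x"] by (simp add: algebra_simps power2_eq_square)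

text \<open>Rotating \<open>z\<close> by \<open>cisq t\<close> only moves its \<open>1, i\<close>-part \<open>w = q0 z + i q1 z\<close>, of modulus
  \<open>|w|\<^sup>2 = 1 - s = A (2 - A)\<close> for \<open>s = sq_jk z\<close> and \<open>A = 1 + \<surd>s\<close>; this makes
  \<open>|1 - cisq t z|\<^sup>2 = 2 - 2 Re (e\<^sup>i\<^sup>t w) = A |1 - e\<^sup>i\<^sup>t w / A|\<^sup>2\<close>.\<close>

lemma norm_qone_minus_cisq_sq:
  assumes z: "norm z = 1" and A_def: "A = 1 + sqrt (sq_jk z)" and v_def: "v = Complex (q0 z / A) (q1 z / A)"
  shows "(norm (qone - qmult (cisq t) z))\<^sup>2 = A * (cmod (1 - cis t * v))\<^sup>2"
proof -
  define R where "R = cos t * q0 z - sin t * q1 z"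
  define I where "I = cos t * q1 z + sin t * q0 z"
  have "A > 0"
    using sq_jk_bounds[OF z] by (simp add: A_def add_pos_nonneg)
  have "R\<^sup>2 + I\<^sup>2 = ((cos t)\<^sup>2 + (sin t)\<^sup>2) * ((q0 z)\<^sup>2 + (q1 z)\<^sup>2)"
    unfolding R_def I_def by algebra
  also have "\<dots> = (q0 z)\<^sup>2 + (q1 z)\<^sup>2"
    by simp
  also have "\<dots> = A * (2 - A)"
    using q0_q1_sq_eq[OF z] sq_jk_bounds[OF z] by (simp add: A_def algebra_simps power2_eq_square)
  finally have RI: "R\<^sup>2 + I\<^sup>2 = A * (2 - A)" .
  have "(norm (qone - qmult (cisq t) z))\<^sup>2 = 2 - 2 * R"
    using norm_qone_minus_sq[of "qmult (cisq t) z"] z by (simp add: norm_qmult R_def)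
  also have "\<dots> = A * ((1 - R / A)\<^sup>2 + (I / A)\<^sup>2)"
    using RI \<open>A > 0\<close> by (simp add: field_simps power2_eq_square)
  also have "(1 - R / A)\<^sup>2 + (I / A)\<^sup>2 = (cmod (1 - cis t * v))\<^sup>2"
    unfolding cmod_power2 v_def R_def I_def by (simp add: cis.ctr algebra_simps diff_divide_distrib add_divide_distrib power2_eq_square)
  finally show ?thesis .
qed

lemma integral_ln_norm_qone_minus_cisq:
  assumes z: "norm z = 1" and pos: "0 < sq_jk z"
  shows "integrable angle_measure (\<lambda>t. ln (norm (qone - qmult (cisq t) z)))"
    "(\<integral>t. ln (norm (qone - qmult (cisq t) z)) \<partial>angle_measure) = pi * ln (1 + sqrt (sq_jk z))"
proof -
  define A where "A = 1 + sqrt (sq_jk z)"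
  define v where "v = Complex (q0 z / A) (q1 z / A)"
  have "A > 1"
    using pos by (simp add: A_def)
  have "(cmod v)\<^sup>2 = (1 - sq_jk z) / A\<^sup>2"
    using q0_q1_sq_eq[OF z] by (simp add: v_def cmod_power2 power_divide flip: add_divide_distrib)
  also have "\<dots> < 1"
    using one_less_power[OF \<open>A > 1\<close>, of 2] pos by (simp add: divide_less_eq)
  finally have v: "cmod v < 1"
    by (simp add: abs_square_less_1)
  have eq: "ln (norm (qone - qmult (cisq t) z)) = ln A / 2 + ln (cmod (1 - cis t * v))" for t
  proof -
    have "norm (qone - qmult (cisq t) z) = sqrt (A * (cmod (1 - cis t * v))\<^sup>2)"
      using norm_qone_minus_cisq_sq[OF z A_def v_def] by (metis norm_ge_zero real_sqrt_unique)
    moreover have "cmod (cis t * v) < 1"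
      using v by (simp add: norm_mult)
    then have "cmod (1 - cis t * v) > 0"
      by (metis norm_one order_less_irrefl right_minus_eq zero_less_norm_iff)
    ultimately show ?thesis
      using \<open>A > 1\<close> by (simp add: ln_sqrt ln_mult ln_realpow)
  qed
  show "integrable angle_measure (\<lambda>t. ln (norm (qone - qmult (cisq t) z)))"
    unfolding eq using integral_angle_measure_ln_norm_1_minus_cis(1)[OF v] by simp
  show "(\<integral>t. ln (norm (qone - qmult (cisq t) z)) \<partial>angle_measure) = pi * ln (1 + sqrt (sq_jk z))"
    unfolding eq using integral_angle_measure_ln_norm_1_minus_cis[OF v] by (simp add: A_def)
qed

lemma ln_norm_qone_minus_le: "norm x = 1 \<Longrightarrow> ln (norm (qone - x)) \<le> ln 2"
  using norm_triangle_ineq4[of qone x] by (cases "qone = x") auto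

lemma nn_integral_circle_ln_norm_qone_minus:
  assumes z: "norm z = 1" and pos: "0 < sq_jk z"
  shows "(\<integral>\<^sup>+ t. ennreal (ln 2 - ln (norm (qone - qmult (cisq t) z))) \<partial>angle_measure)
       = ennreal (2 * pi * ln 2 - pi * ln (1 + sqrt (sq_jk z)))"
proof -
  have "(\<integral>\<^sup>+ t. ennreal (ln 2 - ln (norm (qone - qmult (cisq t) z))) \<partial>angle_measure)
      = ennreal (\<integral>t. ln 2 - ln (norm (qone - qmult (cisq t) z)) \<partial>angle_measure)"
    using integral_ln_norm_qone_minus_cisq(1)[OF z pos] ln_norm_qone_minus_le z
    by (intro nn_integral_eq_integral AE_I2) (simp_all add: norm_qmult)
  then show ?thesis
    using integral_ln_norm_qone_minus_cisq[OF z pos] by simp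
qed

lemma neg_ln_1_minus_sums:
  fixes t :: real
  assumes "\<bar>t\<bar> < 1"
  shows "(\<lambda>n. t ^ Suc n / real (Suc n)) sums (- ln (1 - t))"
proof -
  have "(\<lambda>n. t ^ n / real n) sums (- ln (1 - t))"
    using sums_minus[OF ln_series'[of "- t"]] assms by simp
  then show ?thesis
    by (subst sums_Suc_iff) simp
qed

lemma sums_inverse_Suc_mult_Suc: "(\<lambda>n. 1 / (real (Suc n) * real (Suc (Suc n)))) sums 1"
proof -
  have "(\<lambda>n. 1 / real (Suc n) - 1 / real (Suc (Suc n))) sums (1 / real (Suc 0) - 0)"
    using LIMSEQ_inverse_real_of_nat by (intro telescope_sums') (simp add: inverse_eq_divide)
  moreover have "1 / real (Suc n) - 1 / real (Suc (Suc n)) = 1 / (real (Suc n) * real (Suc (Suc n)))" for n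
    by (simp add: field_simps)
  ultimately show ?thesis
    by simp
qed

context haar_S3
begin

lemma nn_integral_circle_average:
  assumes [measurable]: "F \<in> borel_measurable borel"
  shows "(\<integral>\<^sup>+ z. (\<integral>\<^sup>+ t. F (qmult (cisq t) z) \<partial>angle_measure) \<partial>\<nu>) = ennreal (2 * pi) * (\<integral>\<^sup>+ z. F z \<partial>\<nu>)"
proof -
  have [measurable]: "fst \<in> borel_measurable (\<nu> \<Otimes>\<^sub>M angle_measure)"
    "snd \<in> borel_measurable (\<nu> \<Otimes>\<^sub>M angle_measure)"
    by (rule measurable_compose[OF measurable_fst measurable_ident_borel]
        measurable_compose[OF measurable_snd borel_measurable_angle_measure[OF measurable_ident_sets[OF refl]]])+
  have "(\<integral>\<^sup>+ z. (\<integral>\<^sup>+ t. F (qmult (cisq t) z) \<partial>angle_measure) \<partial>\<nu>)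
      = (\<integral>\<^sup>+ t. (\<integral>\<^sup>+ z. F (qmult (cisq t) z) \<partial>\<nu>) \<partial>angle_measure)"
    by (rule nn_integral_swap[OF sigma_finite angle_measure.sigma_finite_measure_axioms]) measurable
  also have "\<dots> = (\<integral>\<^sup>+ t. (\<integral>\<^sup>+ z. F z \<partial>\<nu>) \<partial>angle_measure)"
    by (intro nn_integral_cong nn_integral_qmult_left) simp_all
  finally show ?thesis
    by (simp add: mult.commute)
qed

lemma integral_ln_1_plus_sqrt_sq_jk:
  "integrable \<nu> (\<lambda>z. ln (1 + sqrt (sq_jk z)))" "(\<integral>z. ln (1 + sqrt (sq_jk z)) \<partial>\<nu>) = 1 / 2"
proof -
  have "continuous_on {0..1} (\<lambda>t. ln (1 + sqrt t))"
    by (intro continuous_intros) (auto simp: add_nonneg_eq_0_iff)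
  then show "integrable \<nu> (\<lambda>z. ln (1 + sqrt (sq_jk z)))" "(\<integral>z. ln (1 + sqrt (sq_jk z)) \<partial>\<nu>) = 1 / 2"
    using integral_sq_jk_continuous[of "\<lambda>t. ln (1 + sqrt t)"] integral_unique[OF has_integral_ln_1_plus_sqrt]
    by simp_all
qed

text \<open>Average first over the circles \<open>t \<mapsto> cisq t z\<close>, which by Jensen's formula gives
  \<open>\<pi> ln (1 + \<surd>(sq_jk z))\<close>, and then over \<open>z\<close> using the uniform distribution of \<open>sq_jk\<close>.\<close>

lemma nn_integral_ln_norm_qone_minus:
  "(\<integral>\<^sup>+ z. ennreal (ln 2 - ln (norm (qone - z))) \<partial>\<nu>) = ennreal (ln 2 - 1 / 4)"
proof -
  have "ennreal (2 * pi) * (\<integral>\<^sup>+ z. ennreal (ln 2 - ln (norm (qone - z))) \<partial>\<nu>)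
      = (\<integral>\<^sup>+ z. (\<integral>\<^sup>+ t. ennreal (ln 2 - ln (norm (qone - qmult (cisq t) z))) \<partial>angle_measure) \<partial>\<nu>)"
    by (rule nn_integral_circle_average[symmetric]) measurable
  also have "\<dots> = (\<integral>\<^sup>+ z. ennreal (2 * pi * ln 2 - pi * ln (1 + sqrt (sq_jk z))) \<partial>\<nu>)"
  proof (rule nn_integral_cong_AE)
    show "AE z in \<nu>. (\<integral>\<^sup>+ t. ennreal (ln 2 - ln (norm (qone - qmult (cisq t) z))) \<partial>angle_measure)
        = ennreal (2 * pi * ln 2 - pi * ln (1 + sqrt (sq_jk z)))"
      using AE_sq_jk_pos AE_space
      by eventually_elim (simp add: nn_integral_circle_ln_norm_qone_minus norm_in_space)
  qed
  also have "\<dots> = ennreal (\<integral>z. 2 * pi * ln 2 - pi * ln (1 + sqrt (sq_jk z)) \<partial>\<nu>)"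
  proof (intro nn_integral_eq_integral AE_I2)
    show "integrable \<nu> (\<lambda>z. 2 * pi * ln 2 - pi * ln (1 + sqrt (sq_jk z)))"
      using integral_ln_1_plus_sqrt_sq_jk(1) by simp
    show "0 \<le> 2 * pi * ln 2 - pi * ln (1 + sqrt (sq_jk z))" if "z \<in> space \<nu>" for z
    proof -
      have "ln (1 + sqrt (sq_jk z)) \<le> ln 2"
        using sq_jk_bounds_space[OF that] by (subst ln_le_cancel_iff) (auto simp: add_pos_nonneg)
      then have "pi * ln (1 + sqrt (sq_jk z)) \<le> pi * ln 2"
        by simp
      moreover have "0 \<le> pi * ln 2"
        by simp
      ultimately show ?thesis
        by linarith
    qed
  qed
  also have "\<dots> = ennreal (2 * pi) * ennreal (ln 2 - 1 / 4)"
    using integral_ln_1_plus_sqrt_sq_jk ln2_ge_two_thirds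
    by (simp add: prob_space ennreal_mult[symmetric] algebra_simps)
  finally show ?thesis
    by (subst (asm) ennreal_mult_cancel_left) auto
qed

lemma nn_integral_ln_norm_qone_plus:
  "(\<integral>\<^sup>+ z. ennreal (ln 2 - ln (norm (qone + z))) \<partial>\<nu>) = ennreal (ln 2 - 1 / 4)"
  using nn_integral_qmult_left[of "- qone" "\<lambda>z. ennreal (ln 2 - ln (norm (qone - z)))"]
  by (simp add: qmult_minus_qone nn_integral_ln_norm_qone_minus)

lemma nn_integral_neg_ln_1_minus_sq_jk: "(\<integral>\<^sup>+ z. ennreal (- ln (1 - sq_jk z)) \<partial>\<nu>) = 1"
proof -
  define f where "f n z = (sq_jk z) ^ Suc n / real (Suc n)" for n z
  have [measurable]: "(\<lambda>z. f n z) \<in> borel_measurable borel" for n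
    unfolding f_def by measurable
  have "(\<integral>\<^sup>+ z. ennreal (- ln (1 - sq_jk z)) \<partial>\<nu>) = (\<integral>\<^sup>+ z. (\<Sum>n. ennreal (f n z)) \<partial>\<nu>)"
  proof (intro nn_integral_cong_AE, use AE_sq_jk_less_1 AE_space in eventually_elim)
    case (elim z)
    then have "(\<lambda>n. f n z) sums (- ln (1 - sq_jk z))"
      unfolding f_def using sq_jk_bounds_space[of z] by (intro neg_ln_1_minus_sums) auto
    then show ?case
      using sq_jk_bounds_space[OF elim(2)] by (simp add: suminf_ennreal2 sums_iff f_def)
  qed
  also have "\<dots> = (\<Sum>n. (\<integral>\<^sup>+ z. ennreal (f n z) \<partial>\<nu>))"
    by (rule nn_integral_suminf) measurable
  also have "(\<lambda>n. (\<integral>\<^sup>+ z. ennreal (f n z) \<partial>\<nu>)) = (\<lambda>n. ennreal (1 / (real (Suc n) * real (Suc (Suc n)))))"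
  proof
    fix n
    have "(\<integral>\<^sup>+ z. ennreal (f n z) \<partial>\<nu>) = ennreal (\<integral>z. f n z \<partial>\<nu>)"
      unfolding f_def using sq_jk_bounds_space
      by (intro nn_integral_eq_integral AE_I2 integrable_divide_zero integrable_sq_jk_power) simp
    also have "(\<integral>z. f n z \<partial>\<nu>) = 1 / (real (Suc n) * real (Suc (Suc n)))"
      unfolding f_def by (simp only: integral_divide_zero integral_sq_jk_power) (simp add: field_simps)
    finally show "(\<integral>\<^sup>+ z. ennreal (f n z) \<partial>\<nu>) = ennreal (1 / (real (Suc n) * real (Suc (Suc n))))" .
  qed
  also have "(\<Sum>n. ennreal (1 / (real (Suc n) * real (Suc (Suc n))))) = 1"
    using sums_inverse_Suc_mult_Suc by (simp add: suminf_ennreal2 sums_iff)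
  finally show ?thesis .
qed

end

section \<open>The substitution \<open>y = x z\<close>\<close>

lemma conjugate_to_qi:
  assumes u0: "q0 u = 0" and u: "norm u = 1"
  obtains a where "a \<in> S3" "qmult a (qmult u (qcnj a)) = qi"
proof (cases "u = - qi")
  case True
  have "qmult qj (qmult (- qi) (qcnj qj)) = qi"
    by (rule quat_eqI) simp_all
  then show ?thesis
    using that[of qj] True by simp
next
  case False
  define b where "b = qone - qmult qi u"
  have "b \<noteq> 0"
  proof
    assume "b = 0"
    then have "q0 (qmult qi u) = 1" "q1 (qmult qi u) = 0" "q2 (qmult qi u) = 0" "q3 (qmult qi u) = 0"
      by (simp_all add: b_def eq_iff_diff_eq_0[symmetric])
    then have "u = - qi"
      by (intro quat_eqI) simp_all
    with False show False ..
  qed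
  have "(q1 u)\<^sup>2 + (q2 u)\<^sup>2 + (q3 u)\<^sup>2 = 1"
    using u u0 norm_quat_sq[of u] by simp
  then have "qmult b u = qmult qi b"
    unfolding b_def using u0 by (intro quat_eqI) (simp_all add: algebra_simps power2_eq_square)
  then have "qmult b (qmult u (qcnj b)) = (norm b)\<^sup>2 *\<^sub>R qi"
    by (simp add: qmult_assoc[symmetric] qmult_assoc[of qi] qmult_qcnj)
  then have "qmult ((1 / norm b) *\<^sub>R b) (qmult u (qcnj ((1 / norm b) *\<^sub>R b))) = qi"
    using \<open>b \<noteq> 0\<close> by (simp add: qcnj_scaleR power2_eq_square)
  moreover have "(1 / norm b) *\<^sub>R b \<in> S3"
    using \<open>b \<noteq> 0\<close> by simp
  ultimately show ?thesis
    using that by blast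
qed

lemma inner_conjugation:
  "a \<in> S3 \<Longrightarrow> inner (qmult a (qmult x (qcnj a))) (qmult a (qmult y (qcnj a))) = inner x y"
  by (simp add: inner_qmult_left inner_qmult_right qmult_assoc[symmetric])

lemma q0_conjugation: "a \<in> S3 \<Longrightarrow> q0 (qmult a (qmult x (qcnj a))) = q0 x"
  using inner_conjugation[of a x qone] by (simp add: qmult_qcnj_S3)

definition vec_sq :: "quat \<Rightarrow> real" where
  "vec_sq z = (q1 z)\<^sup>2 + (q2 z)\<^sup>2 + (q3 z)\<^sup>2"

definition vec_inner :: "quat \<Rightarrow> quat \<Rightarrow> real" where
  "vec_inner x z = q1 x * q1 z + q2 x * q2 z + q3 x * q3 z"

text \<open>The squared length of the projection of \<open>x\<close> onto the plane spanned by \<open>1\<close> and the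
  vector part of \<open>z\<close>.\<close>

definition proj_sq :: "quat \<Rightarrow> quat \<Rightarrow> real" where
  "proj_sq x z = (q0 x)\<^sup>2 + (vec_inner x z)\<^sup>2 / vec_sq z"

lemma proj_sq_conjugation:
  assumes "vec_sq z > 0"
  obtains a where "a \<in> S3" "\<And>x. norm x = 1 \<Longrightarrow> proj_sq x z = 1 - sq_jk (qmult a (qmult x (qcnj a)))"
proof -
  define u where "u = (1 / sqrt (vec_sq z)) *\<^sub>R ((0::real), q1 z, q2 z, q3 z)"
  have "(norm u)\<^sup>2 = 1"
    using assms unfolding norm_quat_sq by (simp add: u_def vec_sq_def power_divide flip: add_divide_distrib)
  then have "norm u = 1"
    using norm_ge_zero[of u] by (auto simp: power2_eq_1_iff)
  moreover have "q0 u = 0"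
    by (simp add: u_def)
  ultimately obtain a where a: "a \<in> S3" and au: "qmult a (qmult u (qcnj a)) = qi"
    using conjugate_to_qi[of u] by blast
  have "proj_sq x z = 1 - sq_jk (qmult a (qmult x (qcnj a)))" if "norm x = 1" for x
  proof -
    let ?y = "qmult a (qmult x (qcnj a))"
    have "q1 ?y = vec_inner x z / sqrt (vec_sq z)"
      using inner_conjugation[OF a, of x u] unfolding au
      by (simp add: inner_quat u_def vec_inner_def add_divide_distrib del: q_qmult)
    then have "(q1 ?y)\<^sup>2 = (vec_inner x z)\<^sup>2 / vec_sq z"
      using assms by (simp add: power_divide)
    moreover have "norm ?y = 1"
      using a that by (simp add: norm_qmult)
    ultimately show ?thesis
      using q0_q1_sq_eq[of ?y] q0_conjugation[OF a, of x] by (simp add: proj_sq_def)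
  qed
  with a show ?thesis
    using that by blast
qed

lemma proj_sq_le_1:
  assumes "norm x = 1" "vec_sq z > 0"
  shows "proj_sq x z \<le> 1"
proof -
  obtain a where "a \<in> S3" "proj_sq x z = 1 - sq_jk (qmult a (qmult x (qcnj a)))"
    using proj_sq_conjugation[OF assms(2)] assms(1) by metis
  then show ?thesis
    using assms(1) sq_jk_bounds[of "qmult a (qmult x (qcnj a))"] by (simp add: norm_qmult)
qed

lemma norm_square_diff_qmult_sq:
  assumes "norm x = 1" "norm z = 1"
  shows "(norm (qmult x x - qmult (qmult x z) (qmult x z)))\<^sup>2 = 4 * ((q0 x)\<^sup>2 * vec_sq z + (vec_inner x z)\<^sup>2)"
proof -
  have "qmult z (qmult (qcnj z) x - qmult x z) = x - qmult z (qmult x z)"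
    using assms by (simp add: qmult_diff_right qmult_assoc[symmetric] qmult_qcnj_S3)
  then have "qmult x x - qmult (qmult x z) (qmult x z) = qmult x (qmult z (qmult (qcnj z) x - qmult x z))"
    by (simp add: qmult_diff_right qmult_assoc)
  moreover have "qmult (qcnj z) x - qmult x z
      = (2 * vec_inner x z, - 2 * q0 x * q1 z, - 2 * q0 x * q2 z, - 2 * q0 x * q3 z)"
    by (rule quat_eqI) (simp_all add: vec_inner_def algebra_simps)
  ultimately have "norm (qmult x x - qmult (qmult x z) (qmult x z))
      = norm (2 * vec_inner x z, - 2 * q0 x * q1 z, - 2 * q0 x * q2 z, - 2 * q0 x * q3 z)"
    using assms by (simp add: norm_qmult)
  then show ?thesis
    using norm_quat_sq[of "(2 * vec_inner x z, - 2 * q0 x * q1 z, - 2 * q0 x * q2 z, - 2 * q0 x * q3 z)"]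
    by (simp add: vec_sq_def algebra_simps power2_eq_square)
qed

lemma norm_qone_minus_square_sq:
  assumes "norm z = 1"
  shows "(norm (qone - qmult z z))\<^sup>2 = 4 * vec_sq z"
proof -
  have "qone - qmult z z = qmult z (qcnj z - z)"
    using assms by (simp add: qmult_diff_right qmult_qcnj_S3)
  moreover have "qcnj z - z = (0, - 2 * q1 z, - 2 * q2 z, - 2 * q3 z)"
    by (rule quat_eqI) simp_all
  ultimately have "norm (qone - qmult z z) = norm ((0::real), - 2 * q1 z, - 2 * q2 z, - 2 * q3 z)"
    using assms by (simp add: norm_qmult)
  then show ?thesis
    using norm_quat_sq[of "((0::real), - 2 * q1 z, - 2 * q2 z, - 2 * q3 z)"]
    by (simp add: vec_sq_def algebra_simps power2_eq_square)
qed

lemma qone_minus_square: "qone - qmult z z = qmult (qone - z) (qone + z)"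
  by (rule quat_eqI) (simp_all add: algebra_simps)

text \<open>Substituting \<open>y = x z\<close> splits \<open>ln |x\<^sup>2 - y\<^sup>2|\<close> into a part depending only on \<open>z\<close> and a part
  that, for fixed \<open>z\<close>, is a function of \<open>sq_jk\<close> after conjugation.\<close>

lemma ln_norm_square_diff_split:
  assumes x: "norm x = 1" and z: "norm z = 1" and V: "vec_sq z > 0" and P: "proj_sq x z > 0"
  shows "ln 4 - ln (norm (qmult x x - qmult (qmult x z) (qmult x z)))
       = (ln 2 - ln (norm (qone - z))) + (ln 2 - ln (norm (qone + z))) + (1 / 2) * (- ln (proj_sq x z))"
proof -
  have "(norm (qmult x x - qmult (qmult x z) (qmult x z)))\<^sup>2 = (norm (qone - qmult z z))\<^sup>2 * proj_sq x z"
    using V unfolding norm_square_diff_qmult_sq[OF x z] norm_qone_minus_square_sq[OF z] proj_sq_def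
    by (simp add: field_simps)
  then have "norm (qmult x x - qmult (qmult x z) (qmult x z)) = norm (qone - z) * norm (qone + z) * sqrt (proj_sq x z)"
    by (metis norm_ge_zero norm_qmult qone_minus_square real_sqrt_abs real_sqrt_mult abs_norm_cancel)
  moreover have "norm (qone - z) * norm (qone + z) > 0"
  proof -
    have "(norm (qone - qmult z z))\<^sup>2 > 0"
      using norm_qone_minus_square_sq[OF z] V by simp
    then show ?thesis
      by (simp add: qone_minus_square norm_qmult zero_less_mult_iff)
  qed
  moreover have "ln (4::real) = ln 2 + ln 2"
    using ln_mult[of 2 2] by simp
  ultimately show ?thesis
    using P by (simp add: ln_mult ln_sqrt zero_less_mult_iff)
qed

lemma (in haar_S3) AE_conjugation:
  assumes a: "a \<in> S3" and [measurable]: "Measurable.pred borel P" and AE: "AE x in \<nu>. P x"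
  shows "AE x in \<nu>. P (qmult a (qmult x (qcnj a)))"
proof -
  have "(\<integral>\<^sup>+ x. indicator {x. \<not> P (qmult a (qmult x (qcnj a)))} x \<partial>\<nu>) = (\<integral>\<^sup>+ x. indicator {x. \<not> P x} x \<partial>\<nu>)"
    using nn_integral_conjugation[OF a, of "indicator {x. \<not> P x}"] by (simp add: indicator_def)
  with AE show ?thesis
    by (simp add: AE_iff_nn_integral)
qed

lemma (in haar_S3) nn_integral_neg_ln_proj_sq:
  assumes "vec_sq z > 0"
  shows "AE x in \<nu>. proj_sq x z > 0" "(\<integral>\<^sup>+ x. ennreal (- ln (proj_sq x z)) \<partial>\<nu>) = 1"
proof -
  obtain a where a: "a \<in> S3" and P: "\<And>x. norm x = 1 \<Longrightarrow> proj_sq x z = 1 - sq_jk (qmult a (qmult x (qcnj a)))"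
    using proj_sq_conjugation[OF assms] by blast
  have "AE x in \<nu>. sq_jk (qmult a (qmult x (qcnj a))) < 1"
    by (rule AE_conjugation[OF a _ AE_sq_jk_less_1]) measurable
  then show "AE x in \<nu>. proj_sq x z > 0"
    using AE_space by eventually_elim (simp add: P norm_in_space)
  have "(\<integral>\<^sup>+ x. ennreal (- ln (proj_sq x z)) \<partial>\<nu>)
      = (\<integral>\<^sup>+ x. ennreal (- ln (1 - sq_jk (qmult a (qmult x (qcnj a))))) \<partial>\<nu>)"
    by (intro nn_integral_cong) (simp add: P norm_in_space)
  also have "\<dots> = 1"
    using nn_integral_conjugation[OF a, of "\<lambda>y. ennreal (- ln (1 - sq_jk y))"]
    by (simp add: nn_integral_neg_ln_1_minus_sq_jk)
  finally show "(\<integral>\<^sup>+ x. ennreal (- ln (proj_sq x z)) \<partial>\<nu>) = 1" .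
qed

lemma ln_norm_square_diff_le: "norm x = 1 \<Longrightarrow> norm y = 1 \<Longrightarrow> ln (norm (qmult x x - qmult y y)) \<le> ln 4"
  using norm_triangle_ineq4[of "qmult x x" "qmult y y"]
  by (cases "qmult x x = qmult y y") (simp_all add: norm_qmult)

lemma ennreal_add3:
  fixes a b c :: real
  assumes "0 \<le> a" "0 \<le> b" "0 \<le> c"
  shows "ennreal (a + b + c) = ennreal a + ennreal b + ennreal c"
  using assms by (simp only: ennreal_plus add_nonneg_nonneg)

lemma vec_sq_ge_sq_jk: "sq_jk z \<le> vec_sq z"
  by (simp add: sq_jk_def vec_sq_def)

lemma (in haar_S3) nn_integral_ln_norm_square_diff_qmult:
  assumes z: "norm z = 1" and V: "vec_sq z > 0"
  shows "(\<integral>\<^sup>+ x. ennreal (ln 4 - ln (norm (qmult x x - qmult (qmult x z) (qmult x z)))) \<partial>\<nu>)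
       = ennreal (ln 2 - ln (norm (qone - z))) + ennreal (ln 2 - ln (norm (qone + z))) + ennreal (1 / 2)"
proof -
  let ?A = "ennreal (ln 2 - ln (norm (qone - z))) + ennreal (ln 2 - ln (norm (qone + z)))"
  have [measurable]: "(\<lambda>x. proj_sq x z) \<in> borel_measurable borel"
    unfolding proj_sq_def vec_inner_def by measurable
  have "(\<integral>\<^sup>+ x. ennreal (ln 4 - ln (norm (qmult x x - qmult (qmult x z) (qmult x z)))) \<partial>\<nu>)
      = (\<integral>\<^sup>+ x. ?A + ennreal (1 / 2) * ennreal (- ln (proj_sq x z)) \<partial>\<nu>)"
  proof (rule nn_integral_cong_AE)
    show "AE x in \<nu>. ennreal (ln 4 - ln (norm (qmult x x - qmult (qmult x z) (qmult x z))))
        = ?A + ennreal (1 / 2) * ennreal (- ln (proj_sq x z))"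
      using nn_integral_neg_ln_proj_sq(1)[OF V] AE_space
    proof eventually_elim
      case (elim x)
      then have x: "norm x = 1"
        by (simp add: norm_in_space)
      have "0 \<le> ln 2 - ln (norm (qone - z))" "0 \<le> ln 2 - ln (norm (qone + z))"
        using ln_norm_qone_minus_le[OF z] ln_norm_qone_minus_le[of "- z"] z by simp_all
      moreover have "0 \<le> - ln (proj_sq x z)"
        using proj_sq_le_1[OF x V] elim by simp
      ultimately show ?case
        unfolding ln_norm_square_diff_split[OF x z V elim(1)]
        by (simp only: ennreal_add3 ennreal_mult mult_nonneg_nonneg)
    qed
  qed
  also have "\<dots> = ?A + ennreal (1 / 2) * (\<integral>\<^sup>+ x. ennreal (- ln (proj_sq x z)) \<partial>\<nu>)"
    by (simp add: nn_integral_add nn_integral_cmult emeasure_space_1)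
  finally show ?thesis
    by (simp add: nn_integral_neg_ln_proj_sq(2)[OF V])
qed

lemma nn_integral_pair_haar_S3_ln_norm_square_diff:
  assumes "haar_S3 \<nu>1" "haar_S3 \<nu>2"
  shows "(\<integral>\<^sup>+ x. (\<integral>\<^sup>+ y. ennreal (ln 4 - ln (norm (qmult x x - qmult y y))) \<partial>\<nu>2) \<partial>\<nu>1) = ennreal (ln 4)"
proof -
  interpret M1: haar_S3 \<nu>1 by fact
  interpret M2: haar_S3 \<nu>2 by fact
  define H where "H x y = ennreal (ln 4 - ln (norm (qmult x x - qmult y y)))" for x y
  have [measurable]: "(\<lambda>p. H (fst p) (snd p)) \<in> borel_measurable borel"
    unfolding H_def by measurable
  have "(\<integral>\<^sup>+ x. (\<integral>\<^sup>+ y. H x y \<partial>\<nu>2) \<partial>\<nu>1) = (\<integral>\<^sup>+ x. (\<integral>\<^sup>+ z. H x (qmult x z) \<partial>\<nu>2) \<partial>\<nu>1)"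
    by (intro nn_integral_cong M2.nn_integral_qmult_left[symmetric]) (simp_all add: M1.space_eq H_def)
  also have "\<dots> = (\<integral>\<^sup>+ z. (\<integral>\<^sup>+ x. H x (qmult x z) \<partial>\<nu>1) \<partial>\<nu>2)"
    by (rule nn_integral_swap[OF M1.sigma_finite M2.sigma_finite]) (unfold H_def, measurable)
  also have "\<dots> = (\<integral>\<^sup>+ z. ennreal (ln 2 - ln (norm (qone - z))) + ennreal (ln 2 - ln (norm (qone + z)))
      + ennreal (1 / 2) \<partial>\<nu>2)"
  proof (rule nn_integral_cong_AE)
    show "AE z in \<nu>2. (\<integral>\<^sup>+ x. H x (qmult x z) \<partial>\<nu>1)
        = ennreal (ln 2 - ln (norm (qone - z))) + ennreal (ln 2 - ln (norm (qone + z))) + ennreal (1 / 2)"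
      using M2.AE_sq_jk_pos AE_space
      by eventually_elim (simp add: H_def M1.nn_integral_ln_norm_square_diff_qmult M2.norm_in_space
          less_le_trans[OF _ vec_sq_ge_sq_jk])
  qed
  also have "\<dots> = ennreal (ln 2 - 1 / 4) + ennreal (ln 2 - 1 / 4) + ennreal (1 / 2)"
    by (simp add: nn_integral_add M2.emeasure_space_1 M2.nn_integral_ln_norm_qone_minus
        M2.nn_integral_ln_norm_qone_plus)
  also have "\<dots> = ennreal ((ln 2 - 1 / 4) + (ln 2 - 1 / 4) + 1 / 2)"
    using ln2_ge_two_thirds by (subst ennreal_add3) simp_all
  also have "(ln 2 - 1 / 4) + (ln 2 - 1 / 4) + 1 / 2 = ln (4::real)"
    using ln_mult[of 2 2] by simp
  finally show ?thesis
    by (simp add: H_def)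
qed

lemma integral_ln_4_minus_ln_norm_square_diff:
  assumes "is_haar_qtorus2 \<mu>"
  shows "integrable \<mu> (\<lambda>z. ln 4 - ln (norm (qmult (fst z) (fst z) - qmult (snd z) (snd z))))"
    "(\<integral>z. ln 4 - ln (norm (qmult (fst z) (fst z) - qmult (snd z) (snd z))) \<partial>\<mu>) = ln 4"
proof -
  interpret M1: haar_S3 "fst_marginal \<mu>" by (rule haar_fst_marginal[OF assms])
  interpret M2: haar_S3 "snd_marginal \<mu>" by (rule haar_snd_marginal[OF assms])
  interpret pair_sigma_finite "fst_marginal \<mu>" "snd_marginal \<mu>"
    by (simp add: pair_sigma_finite_def M1.sigma_finite M2.sigma_finite)
  define f where "f z = ln 4 - ln (norm (qmult (fst z) (fst z) - qmult (snd z) (snd z)))" for z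
  have [measurable]: "f \<in> borel_measurable borel"
    unfolding f_def by measurable
  have [measurable]: "(\<lambda>p. p) \<in> borel_measurable (fst_marginal \<mu> \<Otimes>\<^sub>M snd_marginal \<mu>)"
    using measurable_Pair[of fst "fst_marginal \<mu> \<Otimes>\<^sub>M snd_marginal \<mu>" borel snd borel] by (simp add: borel_prod)
  have "(\<integral>\<^sup>+ z. ennreal (f z) \<partial>\<mu>) = (\<integral>\<^sup>+ z. ennreal (f z) \<partial>(fst_marginal \<mu> \<Otimes>\<^sub>M snd_marginal \<mu>))"
    by (rule nn_integral_haar_qtorus2[OF assms]) measurable
  also have "\<dots> = (\<integral>\<^sup>+ x. (\<integral>\<^sup>+ y. ennreal (f (x, y)) \<partial>snd_marginal \<mu>) \<partial>fst_marginal \<mu>)"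
    by (rule M2.nn_integral_fst[symmetric]) measurable
  also have "\<dots> = ennreal (ln 4)"
    using nn_integral_pair_haar_S3_ln_norm_square_diff[OF haar_fst_marginal[OF assms] haar_snd_marginal[OF assms]]
    by (simp add: f_def)
  finally have "(\<integral>\<^sup>+ z. ennreal (f z) \<partial>\<mu>) = ennreal (ln 4)" .
  moreover have "AE z in \<mu>. 0 \<le> f z"
    using ln_norm_square_diff_le by (intro AE_I2) (auto simp: f_def space_haar_qtorus2[OF assms])
  moreover have "f \<in> borel_measurable \<mu>"
    using measurable_ident_haar_qtorus2[OF assms] by measurable
  ultimately show "integrable \<mu> (\<lambda>z. ln 4 - ln (norm (qmult (fst z) (fst z) - qmult (snd z) (snd z))))"
    "(\<integral>z. ln 4 - ln (norm (qmult (fst z) (fst z) - qmult (snd z) (snd z))) \<partial>\<mu>) = ln 4"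
    unfolding f_def[symmetric] by (simp_all add: nn_integral_eq_integrable)
qed

theorem theorem7p2:
  assumes "is_haar_qtorus2 \<mu>"
  shows "integrable \<mu> (\<lambda>z. ln (norm (qmult (fst z) (fst z) - qmult (snd z) (snd z)))) \<and>
         mahler_H \<mu> (\<lambda>x y. qmult x x - qmult y y) = 0"
proof -
  interpret prob_space \<mu>
    by (rule prob_space_haar_qtorus2[OF assms])
  let ?L = "\<lambda>z. ln (norm (qmult (fst z) (fst z) - qmult (snd z) (snd z)))"
  note int = integral_ln_4_minus_ln_norm_square_diff[OF assms]
  have "integrable \<mu> (\<lambda>z. ln 4 - (ln 4 - ?L z))"
    using Bochner_Integration.integrable_diff[OF integrable_const int(1)] .
  moreover have "(\<integral>z. ln 4 - (ln 4 - ?L z) \<partial>\<mu>) = 0"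
    using int by (subst Bochner_Integration.integral_diff) (simp_all add: prob_space)
  ultimately show ?thesis
    by (simp add: mahler_H_def)
qed

end
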